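(* Let $E$ be a closed MLTS expression and $A$ a type. If the typing judgment $\vdash E : A$ is derivable in the MLTS type system and the evaluation judgment $\vdash E\Downarrow V$ is derivable, then $\vdash V : A$ is derivable.
   Context: MLTS is an extension of core ML whose abstract syntax consists of simply typed meta-level $\lambda$-terms modulo $\alpha\beta\eta$, with expression formers: functions $\mathrm{lam}$, application $\mathrm{app}$, $\mathrm{let}$, $\mathrm{fix}$, constructor applications $\mathrm{variant}\,c\,[\ldots]$, pairs, $\mathrm{new}\,(\lambda X.E)$ (concretely \texttt{new X in E}), nominal abstraction in data $X\backslash E$, its elimination $r\,@\,t_1\ldots t_n$, and $\mathrm{match}$ with clauses built from implicit pattern variables ($\mathrm{all}$), $\mathrm{nab}\,X\;\mathrm{in}\;R$, and $p \to u$. Nominals are fresh constants introduced by the generic quantifier $\nabla$ ($\nabla X.\varphi$ holds iff $\varphi[c/X]$ for a fresh nominal $c$). Types include ML types, function types $A\to B$, and binding types $A\Rightarrow B$. Some primitive (user-defined datatype) types are declared open, written $\vdash A\ \mathrm{open}$; nominals may only have open types (e.g. \texttt{int} is not open). Typing judgments: $\Gamma\vdash M:A$; $\Gamma\vdash A : R : B$ (clause $R$ with pattern type $A$ and right-hand-side type $B$); $\Gamma\vdash p : A \dashv \Delta$ (pattern $p$ of type $A$ producing pattern-variable context $\Delta$). Contexts assign types to variables and nominals. Rules (besides standard ML rules for variables, application, functions, let, let rec, built-ins): $\Gamma\vdash X\backslash M : A\Rightarrow B$ if $\Gamma,X:A\vdash M:B$ and $A$ open; $\Gamma\vdash r\,@\,t_1\ldots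 t_n : A$ if $\Gamma\vdash r:A_1\Rightarrow\cdots\Rightarrow A_n\Rightarrow A$ and $\Gamma\vdash t_i:A_i$; $\Gamma\vdash C(t_1,\dots,t_n):B$ if $C:A_1,\dots,A_n\to B$ and $\Gamma\vdash t_i:A_i$; $\Gamma\vdash(M,N):A*B$ if $\Gamma\vdash M:A$, $\Gamma\vdash N:B$; $\Gamma\vdash \texttt{new } X \texttt{ in } M : B$ if $\Gamma,X:A\vdash M:B$ and $A$ open; $\Gamma\vdash \texttt{match } t \texttt{ with } R_1|\ldots|R_n : A$ if $\Gamma\vdash t:B$ and $\Gamma\vdash B:R_i:A$ for all $i$; $\Gamma\vdash A:\texttt{nab } X \texttt{ in } R:B$ if $\Gamma,X:C\vdash A:R:B$ and $C$ open; $\Gamma\vdash A:(L\to R):B$ if $\Gamma\vdash L:A\dashv\Delta$ and $\Gamma,\Delta\vdash R:B$; pattern rules: $\Gamma\vdash r\,@\,X_1\ldots X_n : A \dashv r:A_1\Rightarrow\cdots\Rightarrow A_n\Rightarrow A$ if $\Gamma\vdash X_i:A_i$ and each $A_i$ open; $\Gamma\vdash x:A\dashv x:A$; $\Gamma\vdash(p,q):A*B\dashv\Delta_1,\Delta_2$ and $\Gamma\vdash C(p_1,\dots,p_n):B\dashv\Delta_1,\dots,\Delta_n$ componentwise. Context extensions always use fresh names. Evaluation $\vdash E\Downarrow V$ (big-step, in the logic $\mathcal{G}$): $\mathrm{lam}\,R\Downarrow\mathrm{lam}\,R$; constructor arguments evaluated componentwise; $\mathrm{new}(\lambda X.E\,X)\Downarrow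 V$ if $\nabla X.(E\,X\Downarrow V)$; $\mathrm{app}\,M\,N\Downarrow V$ if $M\Downarrow\mathrm{lam}\,R$, $N\Downarrow U$, $R\,U\Downarrow V$; $\mathrm{let}\,M\,R\Downarrow V$ if $M\Downarrow U$, $R\,U\Downarrow V$; $\mathrm{fix}\,R\Downarrow V$ if $R(\mathrm{fix}\,R)\Downarrow V$; $M\,@\,X\Downarrow V$ if $M\Downarrow X\backslash R$-form $\mathrm{backslash}\,R$ and $R\,X\Downarrow V$; $\mathrm{backslash}(\lambda X.E\,X)\Downarrow\mathrm{backslash}(\lambda X.V\,X)$ if $\nabla X.(E\,X\Downarrow V\,X)$; $\mathrm{match}\,T\,(Rule::Rules)\Downarrow V$ if $\mathrm{clause}(T,Rule,U)$ and $U\Downarrow V$, or if no $u$ satisfies $\mathrm{clause}(T,Rule,u)$ and $\mathrm{match}\,T\,Rules\Downarrow V$. Here $\mathrm{clause}(T,\mathrm{all}(\lambda x.P\,x),U)$ if $\exists x.\,\mathrm{clause}(T,P\,x,U)$, and $\mathrm{clause}(T,\mathrm{nab}\,Z_1\ldots\mathrm{nab}\,Z_m.(p\Longrightarrow u),U)$ if $T$ matches $P$ (constructor-wise; a nominal $c$ matches $\mathrm{pnom}\,c$; any term $x$ matches $\mathrm{pvar}\,x$) and $(\lambda Z_1\ldots\lambda Z_m.(p\Longrightarrow u))\unrhd(P\Longrightarrow U)$, where $s\unrhd t$ (nominal abstraction) holds iff $s$ is $\lambda$-convertible to the term obtained from $t$ by abstracting some distinct nominals $c_1,\dots,c_n$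 occurring in it. Match clauses satisfy the standing restrictions: each pattern variable occurs exactly once in its pattern; every pattern subexpression $r\,@\,X_1\ldots X_n$ has $r$ a pattern variable and $X_1,\dots,X_n$ distinct nominals bound (by \texttt{nab} or backslash) within the scope of $r$; every \texttt{nab}-bound nominal has at least one rigid occurrence in the pattern, i.e. an occurrence not inside the scope of an \texttt{@}. *)

theory Defs
  imports Main
begin

section \<open>MLTS: types and syntax (locally de Bruijn, nominals as named constants)\<close>

text \<open>Types: int (a built-in ML type, not open), user-declared primitive (datatype)
  types, function types, binding types A => B, and products.\<close>
datatype ty = TInt | TPrim string | TArr ty ty | TBind ty ty | TProd ty ty

text \<open>Bound variables are de Bruijn
  indices (Var); this covers ML variables, new/backslash/nab-bound nominals and
  pattern variables.  Nom c is a nominal constant (introduced by the nabla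
  quantifier during evaluation).  Binders: Lam, Let (2nd arg), Fix, New, Back,
  RAll, RNab, PBack (each binds one index).  At r t is r @ t; r @ t1 ... tn is
  At (... (At r t1) ...) tn.  PV r [X1,...,Xn] is the pattern r @ X1 ... Xn
  (n = 0: plain pattern variable); PNom X is a nominal occurring in a pattern.\<close>
datatype tm =
    Var nat | Nom nat | IntLit int
  | Lam tm | App tm tm | Let tm tm | Fix tm
  | Con string "tm list" | Pair tm tm
  | New tm | Back tm | At tm tm
  | Match tm "rule list"
and rule = RAll rule | RNab rule | RArr pat tm
and pat = PV tm "tm list" | PNom tm | PPair pat pat | PCon string "pat list" | PBack pat

primrec lift :: "nat \<Rightarrow> tm \<Rightarrow> tm"
  and lift_r :: "nat \<Rightarrow> rule \<Rightarrow> rule"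
  and lift_p :: "nat \<Rightarrow> pat \<Rightarrow> pat" where
  "lift k (Var i) = (if i < k then Var i else Var (Suc i))"
| "lift k (Nom c) = Nom c"
| "lift k (IntLit n) = IntLit n"
| "lift k (Lam t) = Lam (lift (Suc k) t)"
| "lift k (App t u) = App (lift k t) (lift k u)"
| "lift k (Let t u) = Let (lift k t) (lift (Suc k) u)"
| "lift k (Fix t) = Fix (lift (Suc k) t)"
| "lift k (Con c ts) = Con c (map (lift k) ts)"
| "lift k (Pair t u) = Pair (lift k t) (lift k u)"
| "lift k (New t) = New (lift (Suc k) t)"
| "lift k (Back t) = Back (lift (Suc k) t)"
| "lift k (At t u) = At (lift k t) (lift k u)"
| "lift k (Match t rs) = Match (lift k t) (map (lift_r k) rs)"
| "lift_r k (RAll r) = RAll (lift_r (Suc k) r)"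
| "lift_r k (RNab r) = RNab (lift_r (Suc k) r)"
| "lift_r k (RArr p u) = RArr (lift_p k p) (lift k u)"
| "lift_p k (PV x ys) = PV (lift k x) (map (lift k) ys)"
| "lift_p k (PNom t) = PNom (lift k t)"
| "lift_p k (PPair p q) = PPair (lift_p k p) (lift_p k q)"
| "lift_p k (PCon c ps) = PCon c (map (lift_p k) ps)"
| "lift_p k (PBack p) = PBack (lift_p (Suc k) p)"

primrec inst :: "nat \<Rightarrow> tm \<Rightarrow> tm \<Rightarrow> tm"
  and inst_r :: "nat \<Rightarrow> tm \<Rightarrow> rule \<Rightarrow> rule"
  and inst_p :: "nat \<Rightarrow> tm \<Rightarrow> pat \<Rightarrow> pat" where
  "inst k s (Var i) = (if i < k then Var i else if i = k then s else Var (i - 1))"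
| "inst k s (Nom c) = Nom c"
| "inst k s (IntLit n) = IntLit n"
| "inst k s (Lam t) = Lam (inst (Suc k) (lift 0 s) t)"
| "inst k s (App t u) = App (inst k s t) (inst k s u)"
| "inst k s (Let t u) = Let (inst k s t) (inst (Suc k) (lift 0 s) u)"
| "inst k s (Fix t) = Fix (inst (Suc k) (lift 0 s) t)"
| "inst k s (Con c ts) = Con c (map (inst k s) ts)"
| "inst k s (Pair t u) = Pair (inst k s t) (inst k s u)"
| "inst k s (New t) = New (inst (Suc k) (lift 0 s) t)"
| "inst k s (Back t) = Back (inst (Suc k) (lift 0 s) t)"
| "inst k s (At t u) = At (inst k s t) (inst k s u)"
| "inst k s (Match t rs) = Match (inst k s t) (map (inst_r k s) rs)"
| "inst_r k s (RAll r) = RAll (inst_r (Suc k) (lift 0 s) r)"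
| "inst_r k s (RNab r) = RNab (inst_r (Suc k) (lift 0 s) r)"
| "inst_r k s (RArr p u) = RArr (inst_p k s p) (inst k s u)"
| "inst_p k s (PV x ys) = PV (inst k s x) (map (inst k s) ys)"
| "inst_p k s (PNom t) = PNom (inst k s t)"
| "inst_p k s (PPair p q) = PPair (inst_p k s p) (inst_p k s q)"
| "inst_p k s (PCon c ps) = PCon c (map (inst_p k s) ps)"
| "inst_p k s (PBack p) = PBack (inst_p (Suc k) (lift 0 s) p)"

primrec close :: "nat \<Rightarrow> nat \<Rightarrow> tm \<Rightarrow> tm"
  and close_r :: "nat \<Rightarrow> nat \<Rightarrow> rule \<Rightarrow> rule"
  and close_p :: "nat \<Rightarrow> nat \<Rightarrow> pat \<Rightarrow> pat" where
  "close k c (Var i) = (if i < k then Var i else Var (Suc i))"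
| "close k c (Nom d) = (if d = c then Var k else Nom d)"
| "close k c (IntLit n) = IntLit n"
| "close k c (Lam t) = Lam (close (Suc k) c t)"
| "close k c (App t u) = App (close k c t) (close k c u)"
| "close k c (Let t u) = Let (close k c t) (close (Suc k) c u)"
| "close k c (Fix t) = Fix (close (Suc k) c t)"
| "close k c (Con d ts) = Con d (map (close k c) ts)"
| "close k c (Pair t u) = Pair (close k c t) (close k c u)"
| "close k c (New t) = New (close (Suc k) c t)"
| "close k c (Back t) = Back (close (Suc k) c t)"
| "close k c (At t u) = At (close k c t) (close k c u)"
| "close k c (Match t rs) = Match (close k c t) (map (close_r k c) rs)"
| "close_r k c (RAll r) = RAll (close_r (Suc k) c r)"
| "close_r k c (RNab r) = RNab (close_r (Suc k) c r)"
| "close_r k c (RArr p u) = RArr (close_p k c p) (close k c u)"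
| "close_p k c (PV x ys) = PV (close k c x) (map (close k c) ys)"
| "close_p k c (PNom t) = PNom (close k c t)"
| "close_p k c (PPair p q) = PPair (close_p k c p) (close_p k c q)"
| "close_p k c (PCon d ps) = PCon d (map (close_p k c) ps)"
| "close_p k c (PBack p) = PBack (close_p (Suc k) c p)"

primrec noms :: "tm \<Rightarrow> nat set"
  and noms_r :: "rule \<Rightarrow> nat set"
  and noms_p :: "pat \<Rightarrow> nat set" where
  "noms (Var i) = {}"
| "noms (Nom c) = {c}"
| "noms (IntLit n) = {}"
| "noms (Lam t) = noms t"
| "noms (App t u) = noms t \<union> noms u"
| "noms (Let t u) = noms t \<union> noms u"
| "noms (Fix t) = noms t"
| "noms (Con c ts) = \<Union> (set (map noms ts))"
| "noms (Pair t u) = noms t \<union> noms u"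
| "noms (New t) = noms t"
| "noms (Back t) = noms t"
| "noms (At t u) = noms t \<union> noms u"
| "noms (Match t rs) = noms t \<union> \<Union> (set (map noms_r rs))"
| "noms_r (RAll r) = noms_r r"
| "noms_r (RNab r) = noms_r r"
| "noms_r (RArr p u) = noms_p p \<union> noms u"
| "noms_p (PV x ys) = noms x \<union> \<Union> (set (map noms ys))"
| "noms_p (PNom t) = noms t"
| "noms_p (PPair p q) = noms_p p \<union> noms_p q"
| "noms_p (PCon c ps) = \<Union> (set (map noms_p ps))"
| "noms_p (PBack p) = noms_p p"

primrec lc :: "nat \<Rightarrow> tm \<Rightarrow> bool"
  and lc_r :: "nat \<Rightarrow> rule \<Rightarrow> bool"
  and lc_p :: "nat \<Rightarrow> pat \<Rightarrow> bool" where
  "lc k (Var i) = (i < k)"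
| "lc k (Nom c) = True"
| "lc k (IntLit n) = True"
| "lc k (Lam t) = lc (Suc k) t"
| "lc k (App t u) = (lc k t \<and> lc k u)"
| "lc k (Let t u) = (lc k t \<and> lc (Suc k) u)"
| "lc k (Fix t) = lc (Suc k) t"
| "lc k (Con c ts) = list_all (lc k) ts"
| "lc k (Pair t u) = (lc k t \<and> lc k u)"
| "lc k (New t) = lc (Suc k) t"
| "lc k (Back t) = lc (Suc k) t"
| "lc k (At t u) = (lc k t \<and> lc k u)"
| "lc k (Match t rs) = (lc k t \<and> list_all (lc_r k) rs)"
| "lc_r k (RAll r) = lc_r (Suc k) r"
| "lc_r k (RNab r) = lc_r (Suc k) r"
| "lc_r k (RArr p u) = (lc_p k p \<and> lc k u)"
| "lc_p k (PV x ys) = (lc k x \<and> list_all (lc k) ys)"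
| "lc_p k (PNom t) = lc k t"
| "lc_p k (PPair p q) = (lc_p k p \<and> lc_p k q)"
| "lc_p k (PCon c ps) = list_all (lc_p k) ps"
| "lc_p k (PBack p) = lc_p (Suc k) p"

section \<open>Standing restrictions on match clauses\<close>

datatype kind = KAll | KNab | KPB

primrec pvc :: "nat \<Rightarrow> pat \<Rightarrow> nat" where
  "pvc i (PV x ys) = (if x = Var i then 1 else 0)"
| "pvc i (PNom t) = 0"
| "pvc i (PPair p q) = pvc i p + pvc i q"
| "pvc i (PCon c ps) = sum_list (map (pvc i) ps)"
| "pvc i (PBack p) = pvc (Suc i) p"

text \<open>Rigid occurrence (not under an @) of the nominal bound at index i.\<close>
primrec rig :: "nat \<Rightarrow> pat \<Rightarrow> bool" where
  "rig i (PV x ys) = False"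
| "rig i (PNom t) = (t = Var i)"
| "rig i (PPair p q) = (rig i p \<or> rig i q)"
| "rig i (PCon c ps) = (True \<in> set (map (rig i) ps))"
| "rig i (PBack p) = rig (Suc i) p"

text \<open>Well-formedness of a pattern: K lists the kinds of the binders local to the
  clause (innermost first); indices beyond length K refer to enclosing binders.\<close>
primrec pwf :: "kind list \<Rightarrow> pat \<Rightarrow> bool" where
  "pwf K (PV x ys) = (\<exists>i js. x = Var i \<and> i < length K \<and> K ! i = KAll \<and> ys = map Var js
        \<and> distinct js \<and> (\<forall>j\<in>set js. j < i \<and> K ! j \<noteq> KAll))"
| "pwf K (PNom t) = ((\<exists>j. t = Var j \<and> (length K \<le> j \<or> K ! j \<noteq> KAll)) \<or> (\<exists>c. t = Nom c))"
| "pwf K (PPair p q) = (pwf K p \<and> pwf K q)"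
| "pwf K (PCon c ps) = list_all (pwf K) ps"
| "pwf K (PBack p) = pwf (KPB # K) p"

text \<open>A clause has the shape all x1..xk. nab Z1..Zm. (p -> u) (pattern variables are
  implicit, hence outermost); each pattern variable occurs exactly once in p and every
  nab-bound nominal occurs rigidly in p.\<close>
primrec restr :: "tm \<Rightarrow> bool"
  and rrestr :: "kind list \<Rightarrow> rule \<Rightarrow> bool" where
  "restr (Var i) = True"
| "restr (Nom c) = True"
| "restr (IntLit n) = True"
| "restr (Lam t) = restr t"
| "restr (App t u) = (restr t \<and> restr u)"
| "restr (Let t u) = (restr t \<and> restr u)"
| "restr (Fix t) = restr t"
| "restr (Con c ts) = list_all restr ts"
| "restr (Pair t u) = (restr t \<and> restr u)"
| "restr (New t) = restr t"
| "restr (Back t) = restr t"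
| "restr (At t u) = (restr t \<and> restr u)"
| "restr (Match t rs) = (restr t \<and> list_all (rrestr []) rs)"
| "rrestr K (RAll r) = (KNab \<notin> set K \<and> rrestr (KAll # K) r)"
| "rrestr K (RNab r) = rrestr (KNab # K) r"
| "rrestr K (RArr p u) = (pwf K p \<and> restr u \<and>
      (\<forall>i < length K. (K ! i = KAll \<longrightarrow> pvc i p = 1) \<and> (K ! i = KNab \<longrightarrow> rig i p)))"

section \<open>Type system\<close>

definition open_ty :: "(string \<Rightarrow> bool) \<Rightarrow> ty \<Rightarrow> bool" where
  "open_ty opn A \<longleftrightarrow> (\<exists>b. A = TPrim b \<and> opn b)"

primrec binds :: "ty list \<Rightarrow> ty \<Rightarrow> ty" where
  "binds [] A = A"
| "binds (B # Bs) A = TBind B (binds Bs A)"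

text \<open>Parameters: opn b (the primitive type b is declared open), csig c = Some (As, b)
  (constructor c : A1,...,An -> b), Phi (types of nominal constants),
  Gamma (types of the de Bruijn-bound variables/nominals, index 0 first).\<close>
inductive has_ty :: "(string \<Rightarrow> bool) \<Rightarrow> (string \<Rightarrow> (ty list \<times> string) option)
      \<Rightarrow> (nat \<Rightarrow> ty option) \<Rightarrow> ty list \<Rightarrow> tm \<Rightarrow> ty \<Rightarrow> bool"
  and rule_ty :: "(string \<Rightarrow> bool) \<Rightarrow> (string \<Rightarrow> (ty list \<times> string) option)
      \<Rightarrow> (nat \<Rightarrow> ty option) \<Rightarrow> ty list \<Rightarrow> ty \<Rightarrow> rule \<Rightarrow> ty \<Rightarrow> bool"
  and pat_ty :: "(string \<Rightarrow> bool) \<Rightarrow> (string \<Rightarrow> (ty list \<times> string) option)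
      \<Rightarrow> (nat \<Rightarrow> ty option) \<Rightarrow> ty list \<Rightarrow> pat \<Rightarrow> ty \<Rightarrow> bool"
  for opn csig \<Phi> where
  t_var: "i < length \<Gamma> \<Longrightarrow> has_ty opn csig \<Phi> \<Gamma> (Var i) (\<Gamma> ! i)"
| t_nom: "\<Phi> c = Some A \<Longrightarrow> has_ty opn csig \<Phi> \<Gamma> (Nom c) A"
| t_int: "has_ty opn csig \<Phi> \<Gamma> (IntLit n) TInt"
| t_lam: "has_ty opn csig \<Phi> (A # \<Gamma>) M B \<Longrightarrow> has_ty opn csig \<Phi> \<Gamma> (Lam M) (TArr A B)"
| t_app: "has_ty opn csig \<Phi> \<Gamma> M (TArr A B) \<Longrightarrow> has_ty opn csig \<Phi> \<Gamma> N A \<Longrightarrow> has_ty opn csig \<Phi> \<Gamma> (App M N) B"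
| t_let: "has_ty opn csig \<Phi> \<Gamma> M A \<Longrightarrow> has_ty opn csig \<Phi> (A # \<Gamma>) N B \<Longrightarrow> has_ty opn csig \<Phi> \<Gamma> (Let M N) B"
| t_fix: "has_ty opn csig \<Phi> (TArr A B # \<Gamma>) M (TArr A B) \<Longrightarrow> has_ty opn csig \<Phi> \<Gamma> (Fix M) (TArr A B)"
| t_con: "csig c = Some (As, b) \<Longrightarrow> list_all2 (has_ty opn csig \<Phi> \<Gamma>) Ms As
          \<Longrightarrow> has_ty opn csig \<Phi> \<Gamma> (Con c Ms) (TPrim b)"
| t_pair: "has_ty opn csig \<Phi> \<Gamma> M A \<Longrightarrow> has_ty opn csig \<Phi> \<Gamma> N B \<Longrightarrow> has_ty opn csig \<Phi> \<Gamma> (Pair M N) (TProd A B)"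
| t_new: "open_ty opn A \<Longrightarrow> has_ty opn csig \<Phi> (A # \<Gamma>) M B \<Longrightarrow> has_ty opn csig \<Phi> \<Gamma> (New M) B"
| t_back: "open_ty opn A \<Longrightarrow> has_ty opn csig \<Phi> (A # \<Gamma>) M B \<Longrightarrow> has_ty opn csig \<Phi> \<Gamma> (Back M) (TBind A B)"
| t_at: "has_ty opn csig \<Phi> \<Gamma> M (TBind A B) \<Longrightarrow> has_ty opn csig \<Phi> \<Gamma> N A \<Longrightarrow> has_ty opn csig \<Phi> \<Gamma> (At M N) B"
| t_match: "has_ty opn csig \<Phi> \<Gamma> M B \<Longrightarrow> list_all (\<lambda>R. rule_ty opn csig \<Phi> \<Gamma> B R A) Rs
          \<Longrightarrow> has_ty opn csig \<Phi> \<Gamma> (Match M Rs) A"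
| r_all: "rule_ty opn csig \<Phi> (C # \<Gamma>) A R B \<Longrightarrow> rule_ty opn csig \<Phi> \<Gamma> A (RAll R) B"
| r_nab: "open_ty opn C \<Longrightarrow> rule_ty opn csig \<Phi> (C # \<Gamma>) A R B \<Longrightarrow> rule_ty opn csig \<Phi> \<Gamma> A (RNab R) B"
| r_arr: "pat_ty opn csig \<Phi> \<Gamma> p A \<Longrightarrow> has_ty opn csig \<Phi> \<Gamma> u B \<Longrightarrow> rule_ty opn csig \<Phi> \<Gamma> A (RArr p u) B"
| p_v: "i < length \<Gamma> \<Longrightarrow> \<Gamma> ! i = binds As A
        \<Longrightarrow> list_all2 (\<lambda>Y B. has_ty opn csig \<Phi> \<Gamma> Y B \<and> open_ty opn B) Ys As
        \<Longrightarrow> pat_ty opn csig \<Phi> \<Gamma> (PV (Var i) Ys) A"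
| p_nom: "has_ty opn csig \<Phi> \<Gamma> X A \<Longrightarrow> open_ty opn A \<Longrightarrow> pat_ty opn csig \<Phi> \<Gamma> (PNom X) A"
| p_pair: "pat_ty opn csig \<Phi> \<Gamma> p A \<Longrightarrow> pat_ty opn csig \<Phi> \<Gamma> q B \<Longrightarrow> pat_ty opn csig \<Phi> \<Gamma> (PPair p q) (TProd A B)"
| p_con: "csig c = Some (As, b) \<Longrightarrow> list_all2 (pat_ty opn csig \<Phi> \<Gamma>) ps As
          \<Longrightarrow> pat_ty opn csig \<Phi> \<Gamma> (PCon c ps) (TPrim b)"
| p_back: "open_ty opn A \<Longrightarrow> pat_ty opn csig \<Phi> (A # \<Gamma>) p B \<Longrightarrow> pat_ty opn csig \<Phi> \<Gamma> (PBack p) (TBind A B)"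

section \<open>Evaluation\<close>

fun inst_backs :: "tm \<Rightarrow> tm list \<Rightarrow> tm option" where
  "inst_backs x [] = Some x"
| "inst_backs (Back b) (y # ys) = inst_backs (inst 0 y b) ys"
| "inst_backs x (y # ys) = None"

inductive pmatch :: "tm \<Rightarrow> pat \<Rightarrow> bool" where
  m_v: "inst_backs x ys = Some T \<Longrightarrow> pmatch T (PV x ys)"
| m_nom: "pmatch (Nom c) (PNom (Nom c))"
| m_pair: "pmatch T1 p \<Longrightarrow> pmatch T2 q \<Longrightarrow> pmatch (Pair T1 T2) (PPair p q)"
| m_con: "list_all2 pmatch Ts ps \<Longrightarrow> pmatch (Con c Ts) (PCon c ps)"
| m_back: "c \<notin> noms t \<union> noms_p p \<Longrightarrow> pmatch (inst 0 (Nom c) t) (inst_p 0 (Nom c) p)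
           \<Longrightarrow> pmatch (Back t) (PBack p)"

fun open_nabs :: "nat list \<Rightarrow> rule \<Rightarrow> rule" where
  "open_nabs [] R = R"
| "open_nabs (c # cs) (RNab R) = open_nabs cs (inst_r 0 (Nom c) R)"
| "open_nabs (c # cs) R = R"

text \<open>clause T R U, with nominal abstraction for the nab block: the Z_i are replaced by
  distinct nominals c_i, not occurring in the clause, occurring in P ==> U.\<close>
inductive clause :: "tm \<Rightarrow> rule \<Rightarrow> tm \<Rightarrow> bool" where
  c_all: "lc 0 x \<Longrightarrow> clause T (inst_r 0 x R) U \<Longrightarrow> clause T (RAll R) U"
| c_nab: "length cs = m \<Longrightarrow> distinct cs
          \<Longrightarrow> (\<forall>c\<in>set cs. c \<notin> noms_r ((RNab ^^ m) (RArr p u)) \<and> c \<in> noms_p P \<union> noms U)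
          \<Longrightarrow> open_nabs cs ((RNab ^^ m) (RArr p u)) = RArr P U
          \<Longrightarrow> pmatch T P
          \<Longrightarrow> clause T ((RNab ^^ m) (RArr p u)) U"

inductive eval :: "tm \<Rightarrow> tm \<Rightarrow> bool"
  and evalm :: "tm \<Rightarrow> rule list \<Rightarrow> tm \<Rightarrow> bool" where
  e_lam: "eval (Lam R) (Lam R)"
| e_nom: "eval (Nom c) (Nom c)"
| e_int: "eval (IntLit n) (IntLit n)"
| e_con: "list_all2 eval Ms Vs \<Longrightarrow> eval (Con c Ms) (Con c Vs)"
| e_pair: "eval M V \<Longrightarrow> eval N W \<Longrightarrow> eval (Pair M N) (Pair V W)"
| e_new: "c \<notin> noms E \<union> noms V \<Longrightarrow> eval (inst 0 (Nom c) E) V \<Longrightarrow> eval (New E) V"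
| e_app: "eval M (Lam R) \<Longrightarrow> eval N U \<Longrightarrow> eval (inst 0 U R) V \<Longrightarrow> eval (App M N) V"
| e_let: "eval M U \<Longrightarrow> eval (inst 0 U R) V \<Longrightarrow> eval (Let M R) V"
| e_fix: "eval (inst 0 (Fix R) R) V \<Longrightarrow> eval (Fix R) V"
| e_at: "eval M (Back R) \<Longrightarrow> eval (inst 0 X R) V \<Longrightarrow> eval (At M X) V"
| e_back: "c \<notin> noms E \<Longrightarrow> eval (inst 0 (Nom c) E) W \<Longrightarrow> eval (Back E) (Back (close 0 c W))"
| e_match: "eval M T \<Longrightarrow> evalm T Rs V \<Longrightarrow> eval (Match M Rs) V"
| em_hit: "clause T R U \<Longrightarrow> eval U V \<Longrightarrow> evalm T (R # Rs) V"
| em_skip: "\<not> (\<exists>u. clause T R u) \<Longrightarrow> evalm T Rs V \<Longrightarrow> evalm T (R # Rs) V"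

end

theory Submission
  imports Defs
begin

text \<open>Subject reduction is proved by induction on evaluation, for an arbitrary typing \<Phi>
  of the nominal constants: new and backslash evaluate their body at a fresh nominal, which
  extends \<Phi>.  Apart from the usual substitution lemma, the crux is a match step.  After the
  nab-bound names of a clause are replaced by distinct fresh nominals and the clause matches,
  every nab-bound name occurs rigidly and therefore meets a nominal of its declared type, while
  every pattern variable r occurs exactly once, as r @ X1 ... Xn with distinct nominals
  X1 ... Xn not occurring in the value chosen for r; the matched subterm is that value applied
  to X1 ... Xn, so abstracting the nominals again shows that the value has the binding type of
  r.  Substituting the well-typed instantiation into the right-hand side gives its type.\<close>

section \<open>Simultaneous substitution\<close>

primrec msubst :: "nat \<Rightarrow> tm list \<Rightarrow> tm \<Rightarrow> tm"
  and msubst_r :: "nat \<Rightarrow> tm list \<Rightarrow> rule \<Rightarrow> rule"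
  and msubst_p :: "nat \<Rightarrow> tm list \<Rightarrow> pat \<Rightarrow> pat" where
  "msubst k ws (Var i) =
     (if i < k then Var i else if i - k < length ws then ws ! (i - k) else Var (i - length ws))"
| "msubst k ws (Nom c) = Nom c"
| "msubst k ws (IntLit n) = IntLit n"
| "msubst k ws (Lam t) = Lam (msubst (Suc k) ws t)"
| "msubst k ws (App t u) = App (msubst k ws t) (msubst k ws u)"
| "msubst k ws (Let t u) = Let (msubst k ws t) (msubst (Suc k) ws u)"
| "msubst k ws (Fix t) = Fix (msubst (Suc k) ws t)"
| "msubst k ws (Con c ts) = Con c (map (msubst k ws) ts)"
| "msubst k ws (Pair t u) = Pair (msubst k ws t) (msubst k ws u)"
| "msubst k ws (New t) = New (msubst (Suc k) ws t)"
| "msubst k ws (Back t) = Back (msubst (Suc k) ws t)"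
| "msubst k ws (At t u) = At (msubst k ws t) (msubst k ws u)"
| "msubst k ws (Match t rs) = Match (msubst k ws t) (map (msubst_r k ws) rs)"
| "msubst_r k ws (RAll r) = RAll (msubst_r (Suc k) ws r)"
| "msubst_r k ws (RNab r) = RNab (msubst_r (Suc k) ws r)"
| "msubst_r k ws (RArr p u) = RArr (msubst_p k ws p) (msubst k ws u)"
| "msubst_p k ws (PV x ys) = PV (msubst k ws x) (map (msubst k ws) ys)"
| "msubst_p k ws (PNom t) = PNom (msubst k ws t)"
| "msubst_p k ws (PPair p q) = PPair (msubst_p k ws p) (msubst_p k ws q)"
| "msubst_p k ws (PCon c ps) = PCon c (map (msubst_p k ws) ps)"
| "msubst_p k ws (PBack p) = PBack (msubst_p (Suc k) ws p)"

lemma pat_induct [case_names PV PNom PPair PCon PBack]: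
  assumes "\<And>x ys. P (PV x ys)" "\<And>t. P (PNom t)" "\<And>p q. P p \<Longrightarrow> P q \<Longrightarrow> P (PPair p q)"
    "\<And>c ps. (\<And>q. q \<in> set ps \<Longrightarrow> P q) \<Longrightarrow> P (PCon c ps)" "\<And>p. P p \<Longrightarrow> P (PBack p)"
  shows "P p"
  by (rule pat.induct[where ?P1.0 = "\<lambda>_. True" and ?P2.0 = "\<lambda>_. True"]) (use assms in auto)

lemma lift_closed:
  "lc j t \<Longrightarrow> j \<le> k \<Longrightarrow> lift k t = t"
  "lc_r j r \<Longrightarrow> j \<le> k \<Longrightarrow> lift_r k r = r"
  "lc_p j p \<Longrightarrow> j \<le> k \<Longrightarrow> lift_p k p = p"
  by (induction t and r and p arbitrary: j k and j k and j k)
     (auto simp: list_all_iff intro!: map_idI)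

lemma lift_lc0 [simp]: "lc 0 t \<Longrightarrow> lift k t = t"
  using lift_closed(1) by blast

lemma inst_closed:
  "lc j t \<Longrightarrow> j \<le> k \<Longrightarrow> inst k s t = t"
  "lc_r j r \<Longrightarrow> j \<le> k \<Longrightarrow> inst_r k s r = r"
  "lc_p j p \<Longrightarrow> j \<le> k \<Longrightarrow> inst_p k s p = p"
  by (induction t and r and p arbitrary: j k s and j k s and j k s)
     (auto simp: list_all_iff intro!: map_idI)

lemma close_inst:
  "c \<notin> noms t \<Longrightarrow> close k c (inst k (Nom c) t) = t"
  "c \<notin> noms_r r \<Longrightarrow> close_r k c (inst_r k (Nom c) r) = r"
  "c \<notin> noms_p p \<Longrightarrow> close_p k c (inst_p k (Nom c) p) = p"
  by (induction t and r and p arbitrary: k and k and k) (auto intro: map_idI)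

lemma noms_lift [simp]:
  "noms (lift k t) = noms t" "noms_r (lift_r k r) = noms_r r" "noms_p (lift_p k p) = noms_p p"
  by (induction t and r and p arbitrary: k and k and k) auto

lemma noms_inst:
  "noms (inst k s t) \<subseteq> noms s \<union> noms t"
  "noms_r (inst_r k s r) \<subseteq> noms s \<union> noms_r r"
  "noms_p (inst_p k s p) \<subseteq> noms s \<union> noms_p p"
  by (induction t and r and p arbitrary: k s and k s and k s) (auto simp: subset_iff; fastforce)+

lemma noms_close: "c \<notin> noms (close k c t)" "c \<notin> noms_r (close_r k c r)" "c \<notin> noms_p (close_p k c p)"
  by (induction t and r and p arbitrary: k and k and k) auto

lemma noms_msubst:
  "noms t \<subseteq> noms (msubst k ws t)"
  "noms_r r \<subseteq> noms_r (msubst_r k ws r)"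
  "noms_p p \<subseteq> noms_p (msubst_p k ws p)"
  by (induction t and r and p arbitrary: k and k and k) fastforce+

lemma msubst_Nil [simp]: "msubst k [] t = t" "msubst_r k [] r = r" "msubst_p k [] p = p"
  by (induction t and r and p arbitrary: k and k and k) (auto intro: map_idI)

lemma inst_msubst:
  assumes "list_all (lc 0) ws" "lc 0 x"
  shows "inst k x (msubst (Suc k) ws t) = msubst k (x # ws) t"
    "inst_r k x (msubst_r (Suc k) ws r) = msubst_r k (x # ws) r"
    "inst_p k x (msubst_p (Suc k) ws p) = msubst_p k (x # ws) p"
  using assms
proof (induction t and r and p arbitrary: k and k and k)
  case (Var i)
  consider "i \<le> k" | "k < i" "i - Suc k < length ws" | "k < i" "\<not> i - Suc k < length ws"
    by linarith
  then show ?case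
  proof cases
    case 2
    then have "lc 0 (ws ! (i - Suc k))" "i - k = Suc (i - Suc k)" using Var by (auto simp: list_all_iff)
    with 2 show ?thesis by (simp add: inst_closed(1)[of 0])
  qed (use Var in auto)
qed auto

section \<open>Substitution-stable restrictions\<close>

text \<open>Unlike restr, this is preserved by substitution: a nominal pattern PNom t only needs
  restr t.  It still forces every head of an @-pattern to be a pattern variable of its own
  clause, so that substitution for outer indices never replaces such a head; typing of PV
  patterns, and hence the substitution lemma, relies on this.\<close>
primrec srestr :: "tm \<Rightarrow> bool"
  and srrestr :: "kind list \<Rightarrow> rule \<Rightarrow> bool"
  and spwf :: "kind list \<Rightarrow> pat \<Rightarrow> bool" where
  "srestr (Var i) = True"
| "srestr (Nom c) = True"
| "srestr (IntLit n) = True"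
| "srestr (Lam t) = srestr t"
| "srestr (App t u) = (srestr t \<and> srestr u)"
| "srestr (Let t u) = (srestr t \<and> srestr u)"
| "srestr (Fix t) = srestr t"
| "srestr (Con c ts) = list_all srestr ts"
| "srestr (Pair t u) = (srestr t \<and> srestr u)"
| "srestr (New t) = srestr t"
| "srestr (Back t) = srestr t"
| "srestr (At t u) = (srestr t \<and> srestr u)"
| "srestr (Match t rs) = (srestr t \<and> list_all (srrestr []) rs)"
| "srrestr K (RAll r) = (KNab \<notin> set K \<and> srrestr (KAll # K) r)"
| "srrestr K (RNab r) = srrestr (KNab # K) r"
| "srrestr K (RArr p u) = (spwf K p \<and> srestr u \<and>
      (\<forall>i < length K. (K ! i = KAll \<longrightarrow> pvc i p = 1) \<and> (K ! i = KNab \<longrightarrow> rig i p)))"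
| "spwf K (PV x ys) = (\<exists>i js. x = Var i \<and> i < length K \<and> K ! i = KAll \<and> ys = map Var js
        \<and> distinct js \<and> (\<forall>j\<in>set js. j < i \<and> K ! j \<noteq> KAll))"
| "spwf K (PNom t) = srestr t"
| "spwf K (PPair p q) = (spwf K p \<and> spwf K q)"
| "spwf K (PCon c ps) = list_all (spwf K) ps"
| "spwf K (PBack p) = spwf (KPB # K) p"

lemma restr_imp_srestr: "restr t \<Longrightarrow> srestr t" "rrestr K r \<Longrightarrow> srrestr K r" "pwf K p \<Longrightarrow> spwf K p"
  by (induction t and r and p arbitrary: K and K and K) (auto simp: list_all_iff)

lemma spwf_PV_fixed:
  assumes "spwf K (PV x ys)" "length K \<le> k" "\<And>j. j < k \<Longrightarrow> f (Var j) = Var j"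
  shows "f x = x \<and> map f ys = ys"
proof -
  obtain i js where "x = Var i" "i < length K" "ys = map Var js" "\<forall>j\<in>set js. j < i"
    using assms(1) by auto
  with assms(2,3) show ?thesis by (auto intro!: map_idI)
qed

lemma map_Var_fixed: "\<forall>j\<in>set js. f (Var j) = Var j \<Longrightarrow> map f (map Var js) = map Var js"
  by (induction js) auto

lemma pvc_lift: "spwf K p \<Longrightarrow> length K \<le> k \<Longrightarrow> pvc i (lift_p k p) = pvc i p"
  by (induction p arbitrary: K k i rule: pat_induct)
     (auto simp: list_all_iff map_Var_fixed intro!: arg_cong[where f=sum_list] map_cong)

lemma pvc_inst: "spwf K p \<Longrightarrow> length K \<le> k \<Longrightarrow> pvc i (inst_p k s p) = pvc i p"
  by (induction p arbitrary: K k i s rule: pat_induct)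
     (auto simp: list_all_iff map_Var_fixed intro!: arg_cong[where f=sum_list] map_cong)

lemma pvc_close: "spwf K p \<Longrightarrow> length K \<le> k \<Longrightarrow> pvc i (close_p k c p) = pvc i p"
  by (induction p arbitrary: K k i rule: pat_induct)
     (auto simp: list_all_iff map_Var_fixed intro!: arg_cong[where f=sum_list] map_cong)

lemma rig_lift: "rig i p \<Longrightarrow> i < k \<Longrightarrow> rig i (lift_p k p)"
  by (induction p arbitrary: i k rule: pat_induct) auto

lemma rig_inst: "rig i p \<Longrightarrow> i < k \<Longrightarrow> rig i (inst_p k s p)"
  by (induction p arbitrary: i k s rule: pat_induct) (auto, blast)

lemma rig_close: "rig i p \<Longrightarrow> i < k \<Longrightarrow> rig i (close_p k c p)"
  by (induction p arbitrary: i k rule: pat_induct) auto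

lemma srestr_lift:
  "srestr t \<Longrightarrow> srestr (lift k t)"
  "srrestr K r \<Longrightarrow> length K \<le> k \<Longrightarrow> srrestr K (lift_r k r)"
  "spwf K p \<Longrightarrow> length K \<le> k \<Longrightarrow> spwf K (lift_p k p)"
proof (induction t and r and p arbitrary: k and K k and K k)
  case (PV x ys)
  then show ?case using spwf_PV_fixed[of K x ys k "lift k"] by simp
qed (auto simp: list_all_iff pvc_lift rig_lift)

lemma srestr_inst:
  "srestr s \<Longrightarrow> srestr t \<Longrightarrow> srestr (inst k s t)"
  "srestr s \<Longrightarrow> srrestr K r \<Longrightarrow> length K \<le> k \<Longrightarrow> srrestr K (inst_r k s r)"
  "srestr s \<Longrightarrow> spwf K p \<Longrightarrow> length K \<le> k \<Longrightarrow> spwf K (inst_p k s p)"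
proof (induction t and r and p arbitrary: k s and K k s and K k s)
  case (PV x ys)
  then show ?case using spwf_PV_fixed[of K x ys k "inst k s"] by simp
qed (auto simp: list_all_iff pvc_inst rig_inst srestr_lift)

lemma srestr_close:
  "srestr t \<Longrightarrow> srestr (close k c t)"
  "srrestr K r \<Longrightarrow> length K \<le> k \<Longrightarrow> srrestr K (close_r k c r)"
  "spwf K p \<Longrightarrow> length K \<le> k \<Longrightarrow> spwf K (close_p k c p)"
proof (induction t and r and p arbitrary: k and K k and K k)
  case (PV x ys)
  then show ?case using spwf_PV_fixed[of K x ys k "close k c"] by simp
qed (auto simp: list_all_iff pvc_close rig_close)

lemma srestr_msubst:
  "list_all (lc 0) ws \<Longrightarrow> list_all srestr ws \<Longrightarrow> srestr u \<Longrightarrow> srestr (msubst k ws u)"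
proof (induction ws arbitrary: k)
  case (Cons w ws)
  then show ?case using inst_msubst(1)[of ws w k u, symmetric] srestr_inst(1) by simp
qed simp

section \<open>Typing under weakening and substitution\<close>

lemma has_ty_cong_noms:
  "has_ty opn csig \<Phi> \<Gamma> t A \<Longrightarrow> (\<forall>c\<in>noms t. \<Phi>' c = \<Phi> c) \<Longrightarrow> has_ty opn csig \<Phi>' \<Gamma> t A"
  "rule_ty opn csig \<Phi> \<Gamma> B R A \<Longrightarrow> (\<forall>c\<in>noms_r R. \<Phi>' c = \<Phi> c) \<Longrightarrow> rule_ty opn csig \<Phi>' \<Gamma> B R A"
  "pat_ty opn csig \<Phi> \<Gamma> p A \<Longrightarrow> (\<forall>c\<in>noms_p p. \<Phi>' c = \<Phi> c) \<Longrightarrow> pat_ty opn csig \<Phi>' \<Gamma> p A"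
proof (induction rule: has_ty_rule_ty_pat_ty.inducts)
  case (t_match \<Gamma> M B A Rs)
  then show ?case
    by (auto simp: list_all_iff intro!: has_ty_rule_ty_pat_ty.intros) blast
qed (auto intro!: has_ty_rule_ty_pat_ty.intros elim!: list.rel_mono_strong)

lemma has_ty_VarI: "i < length \<Gamma> \<Longrightarrow> A = \<Gamma> ! i \<Longrightarrow> has_ty opn csig \<Phi> \<Gamma> (Var i) A"
  using has_ty_rule_ty_pat_ty.t_var by blast

lemma nth_append_Cons_below [simp]: "i < length \<Delta> \<Longrightarrow> (\<Delta> @ C # \<Gamma>) ! i = (\<Delta> @ \<Gamma>) ! i"
  by (simp add: nth_append)

lemma nth_append_Cons_above [simp]: "\<not> i < length \<Delta> \<Longrightarrow> (\<Delta> @ C # \<Gamma>) ! Suc i = (\<Delta> @ \<Gamma>) ! i"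
  by (simp add: nth_append Suc_diff_le)

lemma has_ty_lift:
  "has_ty opn csig \<Phi> \<Gamma>0 t A \<Longrightarrow> \<forall>\<Delta>. \<Gamma>0 = \<Delta> @ \<Gamma> \<longrightarrow>
     has_ty opn csig \<Phi> (\<Delta> @ C # \<Gamma>) (lift (length \<Delta>) t) A"
  "rule_ty opn csig \<Phi> \<Gamma>0 B R A \<Longrightarrow> \<forall>\<Delta>. \<Gamma>0 = \<Delta> @ \<Gamma> \<longrightarrow>
     rule_ty opn csig \<Phi> (\<Delta> @ C # \<Gamma>) B (lift_r (length \<Delta>) R) A"
  "pat_ty opn csig \<Phi> \<Gamma>0 p A \<Longrightarrow> \<forall>\<Delta>. \<Gamma>0 = \<Delta> @ \<Gamma> \<longrightarrow>
     pat_ty opn csig \<Phi> (\<Delta> @ C # \<Gamma>) (lift_p (length \<Delta>) p) A"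
proof (induction rule: has_ty_rule_ty_pat_ty.inducts)
  case (t_var i \<Gamma>0)
  then show ?case by (auto intro!: has_ty_VarI)
next
  case (p_v i \<Gamma>0 As A Ys)
  then show ?case
    by (auto intro!: has_ty_rule_ty_pat_ty.p_v simp: list_all2_map1 elim!: list.rel_mono_strong)
next
  case (t_match \<Gamma> M B A Rs)
  then show ?case by (auto simp: list_all_iff intro!: has_ty_rule_ty_pat_ty.intros)
qed (auto intro!: has_ty_rule_ty_pat_ty.intros simp: list_all2_map1
    elim!: list.rel_mono_strong simp del: append_Cons simp: append_Cons[symmetric])

lemma has_ty_lift0: "has_ty opn csig \<Phi> \<Gamma> s C \<Longrightarrow> has_ty opn csig \<Phi> (A # \<Gamma>) (lift 0 s) C"
  using has_ty_lift(1)[of opn csig \<Phi> \<Gamma> s C \<Gamma> A] by auto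

lemma has_ty_lift0_append:
  "has_ty opn csig \<Phi> (\<Delta> @ \<Gamma>) s C \<Longrightarrow> has_ty opn csig \<Phi> ((A # \<Delta>) @ \<Gamma>) (lift 0 s) C"
  using has_ty_lift0 by fastforce

lemma has_ty_closed_weaken: "has_ty opn csig \<Phi> [] w C \<Longrightarrow> lc 0 w \<Longrightarrow> has_ty opn csig \<Phi> \<Delta> w C"
  by (induction \<Delta>) (use has_ty_lift0[of opn csig \<Phi> _ w C] in auto)

lemma has_ty_close:
  "has_ty opn csig \<Phi> \<Gamma>0 t A \<Longrightarrow> \<forall>\<Delta>. \<Gamma>0 = \<Delta> @ \<Gamma> \<longrightarrow> \<Phi> c = Some C \<longrightarrow>
     has_ty opn csig \<Phi> (\<Delta> @ C # \<Gamma>) (close (length \<Delta>) c t) A"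
  "rule_ty opn csig \<Phi> \<Gamma>0 B R A \<Longrightarrow> \<forall>\<Delta>. \<Gamma>0 = \<Delta> @ \<Gamma> \<longrightarrow> \<Phi> c = Some C \<longrightarrow>
     rule_ty opn csig \<Phi> (\<Delta> @ C # \<Gamma>) B (close_r (length \<Delta>) c R) A"
  "pat_ty opn csig \<Phi> \<Gamma>0 p A \<Longrightarrow> \<forall>\<Delta>. \<Gamma>0 = \<Delta> @ \<Gamma> \<longrightarrow> \<Phi> c = Some C \<longrightarrow>
     pat_ty opn csig \<Phi> (\<Delta> @ C # \<Gamma>) (close_p (length \<Delta>) c p) A"
proof (induction rule: has_ty_rule_ty_pat_ty.inducts)
  case (t_var i \<Gamma>0)
  then show ?case by (auto intro!: has_ty_VarI)
next
  case (t_nom d A \<Gamma>0)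
  then show ?case
    by (auto intro: has_ty_VarI has_ty_rule_ty_pat_ty.t_nom)
next
  case (p_v i \<Gamma>0 As A Ys)
  then show ?case
    by (auto intro!: has_ty_rule_ty_pat_ty.p_v simp: list_all2_map1 elim!: list.rel_mono_strong)
next
  case (t_match \<Gamma> M B A Rs)
  then show ?case by (auto simp: list_all_iff intro!: has_ty_rule_ty_pat_ty.intros)
qed (auto intro!: has_ty_rule_ty_pat_ty.intros simp: list_all2_map1
    elim!: list.rel_mono_strong simp del: append_Cons simp: append_Cons[symmetric])

lemma has_ty_close0:
  "has_ty opn csig \<Phi> [] W B \<Longrightarrow> \<Phi> c = Some A \<Longrightarrow> has_ty opn csig \<Phi> [A] (close 0 c W) B"
  using has_ty_close(1)[of opn csig \<Phi> "[]" W B "[]" c A] by auto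

lemma has_ty_inst:
  "has_ty opn csig \<Phi> \<Gamma>0 t A \<Longrightarrow> \<forall>\<Delta> s. \<Gamma>0 = \<Delta> @ C # \<Gamma> \<longrightarrow> srestr t
     \<longrightarrow> has_ty opn csig \<Phi> (\<Delta> @ \<Gamma>) s C \<longrightarrow> has_ty opn csig \<Phi> (\<Delta> @ \<Gamma>) (inst (length \<Delta>) s t) A"
  "rule_ty opn csig \<Phi> \<Gamma>0 B R A \<Longrightarrow> \<forall>\<Delta> s K. \<Gamma>0 = \<Delta> @ C # \<Gamma> \<longrightarrow> srrestr K R \<longrightarrow> length K \<le> length \<Delta>
     \<longrightarrow> has_ty opn csig \<Phi> (\<Delta> @ \<Gamma>) s C \<longrightarrow> rule_ty opn csig \<Phi> (\<Delta> @ \<Gamma>) B (inst_r (length \<Delta>) s R) A"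
  "pat_ty opn csig \<Phi> \<Gamma>0 p A \<Longrightarrow> \<forall>\<Delta> s K. \<Gamma>0 = \<Delta> @ C # \<Gamma> \<longrightarrow> spwf K p \<longrightarrow> length K \<le> length \<Delta>
     \<longrightarrow> has_ty opn csig \<Phi> (\<Delta> @ \<Gamma>) s C \<longrightarrow> pat_ty opn csig \<Phi> (\<Delta> @ \<Gamma>) (inst_p (length \<Delta>) s p) A"
proof (induction rule: has_ty_rule_ty_pat_ty.inducts)
  case (t_var i \<Gamma>0)
  then show ?case
    by (auto intro!: has_ty_VarI simp: nth_append not_less less_Suc_eq_le dest: le_imp_less_Suc) 
next
  case (p_v i \<Gamma>0 As A Ys)
  then show ?case
    by (auto intro!: has_ty_rule_ty_pat_ty.p_v simp: list_all2_map1 elim!: list.rel_mono_strong)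
next
  case (t_match \<Gamma> M B A Rs)
  then show ?case
    by (auto simp: list_all_iff intro!: has_ty_rule_ty_pat_ty.intros) (metis list.size(3) zero_le)
qed (auto intro!: has_ty_rule_ty_pat_ty.intros simp: list_all2_map1 list_all_iff
    elim!: list.rel_mono_strong simp del: append_Cons simp: append_Cons[symmetric];
    fastforce intro: has_ty_lift0_append)+

lemma has_ty_inst0:
  "has_ty opn csig \<Phi> [C] t A \<Longrightarrow> srestr t \<Longrightarrow> has_ty opn csig \<Phi> [] s C
   \<Longrightarrow> has_ty opn csig \<Phi> [] (inst 0 s t) A"
  using has_ty_inst(1)[of opn csig \<Phi> "[C]" t A C "[]"] by auto

lemma has_ty_inst0_fresh:
  assumes "has_ty opn csig \<Phi> [C] t A" "srestr t" "c \<notin> noms t"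
  shows "has_ty opn csig (\<Phi>(c := Some C)) [] (inst 0 (Nom c) t) A \<and> srestr (inst 0 (Nom c) t)"
proof -
  have "has_ty opn csig (\<Phi>(c := Some C)) [C] t A"
    using assms(1,3) by (auto intro: has_ty_cong_noms(1))
  moreover have "has_ty opn csig (\<Phi>(c := Some C)) [] (Nom c) C"
    by (rule has_ty_rule_ty_pat_ty.t_nom) simp
  ultimately show ?thesis using has_ty_inst0 assms(2) srestr_inst(1)[of "Nom c" t 0] by auto
qed

lemma has_ty_msubst:
  assumes "has_ty opn csig \<Phi> (\<Delta> @ \<Gamma>) u A" "srestr u" "length ws = length \<Gamma>"
    "\<forall>i<length \<Gamma>. has_ty opn csig \<Phi> [] (ws ! i) (\<Gamma> ! i)"
    "list_all (lc 0) ws" "list_all srestr ws"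
  shows "has_ty opn csig \<Phi> \<Delta> (msubst (length \<Delta>) ws u) A"
  using assms
proof (induction ws arbitrary: \<Delta> \<Gamma>)
  case (Cons w ws)
  then obtain C \<Gamma>' where \<Gamma>: "\<Gamma> = C # \<Gamma>'" by (cases \<Gamma>) auto
  have w: "has_ty opn csig \<Phi> \<Delta> w C"
    using Cons.prems(4,5) \<Gamma> has_ty_closed_weaken by force
  have "has_ty opn csig \<Phi> (\<Delta> @ [C]) (msubst (Suc (length \<Delta>)) ws u) A"
    using Cons.IH[of "\<Delta> @ [C]" \<Gamma>'] Cons.prems \<Gamma> by fastforce
  moreover have "srestr (msubst (Suc (length \<Delta>)) ws u)"
    using srestr_msubst Cons.prems by simp
  ultimately have "has_ty opn csig \<Phi> \<Delta> (inst (length \<Delta>) w (msubst (Suc (length \<Delta>)) ws u)) A"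
    using has_ty_inst(1)[of opn csig \<Phi> "\<Delta> @ [C]" _ A C "[]"] w by simp
  then show ?case using inst_msubst(1) Cons.prems(5) by simp
qed simp

inductive_cases has_ty_VarE: "has_ty opn csig \<Phi> \<Gamma> (Var i) A"
inductive_cases has_ty_NomE: "has_ty opn csig \<Phi> \<Gamma> (Nom c) A"
inductive_cases has_ty_PairE: "has_ty opn csig \<Phi> \<Gamma> (Pair M N) A"
inductive_cases has_ty_ConE: "has_ty opn csig \<Phi> \<Gamma> (Con c Ms) A"
inductive_cases has_ty_BackE: "has_ty opn csig \<Phi> \<Gamma> (Back M) A"
inductive_cases has_ty_LamE: "has_ty opn csig \<Phi> \<Gamma> (Lam M) A"
inductive_cases has_ty_AppE: "has_ty opn csig \<Phi> \<Gamma> (App M N) A"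
inductive_cases has_ty_LetE: "has_ty opn csig \<Phi> \<Gamma> (Let M N) A"
inductive_cases has_ty_FixE: "has_ty opn csig \<Phi> \<Gamma> (Fix M) A"
inductive_cases has_ty_NewE: "has_ty opn csig \<Phi> \<Gamma> (New M) A"
inductive_cases has_ty_AtE: "has_ty opn csig \<Phi> \<Gamma> (At M N) A"
inductive_cases has_ty_MatchE: "has_ty opn csig \<Phi> \<Gamma> (Match M Rs) A"

section \<open>Pattern matching\<close>

inductive_cases pmatch_PVE: "pmatch T (PV x ys)"
inductive_cases pmatch_PNomE: "pmatch T (PNom t)"
inductive_cases pmatch_PPairE: "pmatch T (PPair p q)"
inductive_cases pmatch_PConE: "pmatch T (PCon c ps)"
inductive_cases pmatch_PBackE: "pmatch T (PBack p)"
inductive_cases pat_ty_PVE: "pat_ty opn csig \<Phi> \<Gamma> (PV x ys) A"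
inductive_cases pat_ty_PNomE: "pat_ty opn csig \<Phi> \<Gamma> (PNom t) A"
inductive_cases pat_ty_PPairE: "pat_ty opn csig \<Phi> \<Gamma> (PPair p q) A"
inductive_cases pat_ty_PConE: "pat_ty opn csig \<Phi> \<Gamma> (PCon c ps) A"
inductive_cases pat_ty_PBackE: "pat_ty opn csig \<Phi> \<Gamma> (PBack p) A"

primrec nom_idx :: "pat \<Rightarrow> nat set" where
  "nom_idx (PV x ys) = {j. Var j \<in> set ys}"
| "nom_idx (PNom t) = {j. t = Var j}"
| "nom_idx (PPair p q) = nom_idx p \<union> nom_idx q"
| "nom_idx (PCon c ps) = \<Union> (set (map nom_idx ps))"
| "nom_idx (PBack p) = {j. Suc j \<in> nom_idx p}"

lemma rig_nom_idx: "rig j p \<Longrightarrow> j \<in> nom_idx p"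
  by (induction p arbitrary: j rule: pat_induct) auto

lemma noms_msubst_pvc:
  "pvc j p \<noteq> 0 \<Longrightarrow> k \<le> j \<Longrightarrow> j - k < length ws \<Longrightarrow> noms (ws ! (j - k)) \<subseteq> noms_p (msubst_p k ws p)"
proof (induction p arbitrary: j k rule: pat_induct)
  case (PCon c ps)
  then obtain q where "q \<in> set ps" "pvc j q \<noteq> 0" by (auto simp: sum_list_eq_0_iff)
  then show ?case using PCon by fastforce
next
  case (PBack p)
  then show ?case using PBack.IH[of "Suc j" "Suc k"] by simp
next
  case (PPair p q)
  then show ?case by (simp; blast)
qed (auto split: if_splits)

lemma noms_msubst_nom_idx:
  "j \<in> nom_idx p \<Longrightarrow> k \<le> j \<Longrightarrow> j - k < length ws \<Longrightarrow> noms (ws ! (j - k)) \<subseteq> noms_p (msubst_p k ws p)"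
proof (induction p arbitrary: j k rule: pat_induct)
  case (PV x ys)
  then have "ws ! (j - k) \<in> set (map (msubst k ws) ys)" by force
  then show ?case by auto
next
  case (PCon c ps)
  then obtain q where "q \<in> set ps" "j \<in> nom_idx q" by auto
  then show ?case using PCon by fastforce
next
  case (PBack p)
  then show ?case using PBack.IH[of "Suc j" "Suc k"] by simp
next
  case (PPair p q)
  then show ?case by (simp; blast)
qed auto

lemma has_ty_of_inst_backs:
  assumes "inst_backs x ys = Some T" "distinct ys"
    "list_all2 (\<lambda>y A. \<exists>c. y = Nom c \<and> c \<notin> noms x \<and> \<Phi> c = Some A \<and> open_ty opn A) ys As"
    "has_ty opn csig \<Phi> [] T B" "srestr T"
  shows "has_ty opn csig \<Phi> [] x (binds As B) \<and> srestr x"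
  using assms
proof (induction ys arbitrary: x As)
  case (Cons y ys)
  then obtain b where x: "x = Back b" by (cases x) auto
  from Cons.prems(3) obtain A1 As' c where As: "As = A1 # As'" and c: "y = Nom c"
    "c \<notin> noms b" "\<Phi> c = Some A1" "open_ty opn A1"
    and ys: "list_all2 (\<lambda>y A. \<exists>c. y = Nom c \<and> c \<notin> noms b \<and> \<Phi> c = Some A \<and> open_ty opn A) ys As'"
    by (auto simp: x list_all2_Cons1)
  let ?W = "inst 0 (Nom c) b"
  have "list_all2 (\<lambda>y A. \<exists>d. y = Nom d \<and> d \<notin> noms ?W \<and> \<Phi> d = Some A \<and> open_ty opn A) ys As'"
    using ys Cons.prems(2) noms_inst(1)[of 0 "Nom c" b] unfolding c(1)
    by (fastforce elim!: list.rel_mono_strong)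
  then have W: "has_ty opn csig \<Phi> [] ?W (binds As' B) \<and> srestr ?W"
    using Cons.IH Cons.prems x c(1) by simp
  have b: "close 0 c ?W = b" using close_inst(1) c(2) by blast
  have "has_ty opn csig \<Phi> [A1] b (binds As' B)"
    using has_ty_close0[OF W[THEN conjunct1] c(3)] b by simp
  moreover have "srestr b" using srestr_close(1)[of ?W 0 c] W b by simp
  ultimately show ?case using x As c(4) by (auto intro: has_ty_rule_ty_pat_ty.t_back)
qed auto

lemma has_ty_Back_inst_fresh:
  assumes "has_ty opn csig \<Phi> [] (Back t) (TBind A B)" "srestr t" "d \<notin> noms t"
  shows "has_ty opn csig (\<Phi>(d := Some A)) [] (inst 0 (Nom d) t) B \<and> srestr (inst 0 (Nom d) t)"
  using assms has_ty_inst0_fresh by (auto elim: has_ty_BackE)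

lemma pmatch_rigid_nominal:
  assumes "pmatch T (msubst_p 0 ws p)" "pat_ty opn csig \<Phi> \<Gamma> p B" "has_ty opn csig \<Phi> [] T B"
    "srestr T" "length ws = length \<Gamma>" "list_all (lc 0) ws" "i < length \<Gamma>" "rig i p"
  shows "\<exists>c. ws ! i = Nom c \<and> \<Phi> c = Some (\<Gamma> ! i)"
  using assms
proof (induction p arbitrary: T \<Phi> \<Gamma> B ws i rule: pat_induct)
  case (PNom X)
  then obtain c where "ws ! i = Nom c" "T = Nom c" "B = \<Gamma> ! i"
    by (auto elim!: pmatch_PNomE pat_ty_PNomE has_ty_VarE)
  then show ?case using PNom.prems(3) by (auto elim: has_ty_NomE)
next
  case (PPair p q)
  then show ?case by (fastforce elim!: pmatch_PPairE pat_ty_PPairE has_ty_PairE)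
next
  case (PCon c ps)
  from PCon.prems(1) obtain Ts where Ts: "T = Con c Ts" "list_all2 pmatch Ts (map (msubst_p 0 ws) ps)"
    by (auto elim: pmatch_PConE)
  from PCon.prems(2) obtain As b where As: "csig c = Some (As, b)" "list_all2 (pat_ty opn csig \<Phi> \<Gamma>) ps As"
    by (auto elim: pat_ty_PConE)
  from PCon.prems(3) Ts As have "list_all2 (has_ty opn csig \<Phi> []) Ts As" by (auto elim: has_ty_ConE)
  moreover obtain k where "k < length ps" "rig i (ps ! k)" using PCon.prems(8) by (auto simp: in_set_conv_nth)
  ultimately show ?case
    using PCon.IH[of "ps ! k" "Ts ! k"] PCon.prems Ts As
    by (auto simp: list_all2_conv_all_nth list_all_iff)
next
  case (PBack p)
  from PBack.prems(1) obtain t d where T: "T = Back t" "d \<notin> noms t \<union> noms_p (msubst_p 1 ws p)"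
    "pmatch (inst 0 (Nom d) t) (inst_p 0 (Nom d) (msubst_p 1 ws p))"
    by (auto elim: pmatch_PBackE)
  from PBack.prems(2) obtain A B' where B: "B = TBind A B'" "pat_ty opn csig \<Phi> (A # \<Gamma>) p B'"
    by (auto elim: pat_ty_PBackE)
  let ?\<Phi> = "\<Phi>(d := Some A)"
  have pm: "pmatch (inst 0 (Nom d) t) (msubst_p 0 (Nom d # ws) p)"
    using T(3) inst_msubst(3) PBack.prems(6) by auto
  have "d \<notin> noms_p p" using T(2) noms_msubst(3)[of p 1 ws] by auto
  then have pt: "pat_ty opn csig ?\<Phi> (A # \<Gamma>) p B'" using has_ty_cong_noms(3)[OF B(2)] by auto
  have ht: "has_ty opn csig ?\<Phi> [] (inst 0 (Nom d) t) B' \<and> srestr (inst 0 (Nom d) t)"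
    using has_ty_Back_inst_fresh PBack.prems T B by auto
  have "\<exists>c. (Nom d # ws) ! Suc i = Nom c \<and> ?\<Phi> c = Some ((A # \<Gamma>) ! Suc i)"
    by (rule PBack.IH[OF pm pt ht[THEN conjunct1] ht[THEN conjunct2]]) (use PBack.prems in auto)
  then obtain c where c: "ws ! i = Nom c" "?\<Phi> c = Some (\<Gamma> ! i)" by auto
  have "noms (ws ! i) \<subseteq> noms_p (msubst_p 1 ws p)"
    using noms_msubst_nom_idx[of "Suc i" p 1 ws] rig_nom_idx PBack.prems by auto
  then have "c \<noteq> d" using T(2) c(1) by auto
  then show ?case using c by auto
qed auto

text \<open>Invariants for the descent into a matched pattern, whose free indices are instantiated by
  ws: the indices of kind other than KAll (bound by nab or by a backslash pattern) that the
  pattern uses as nominals are instantiated by distinct nominals of the right type, which do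
  not occur in the instances of its pattern variables.\<close>
definition nominals_typed :: "(nat \<Rightarrow> ty option) \<Rightarrow> ty list \<Rightarrow> kind list \<Rightarrow> tm list \<Rightarrow> pat \<Rightarrow> bool" where
  "nominals_typed \<Phi> \<Gamma> K ws p \<longleftrightarrow> (\<forall>j\<in>nom_idx p. j < length \<Gamma> \<longrightarrow> K ! j \<noteq> KAll \<longrightarrow>
     (\<exists>c. ws ! j = Nom c \<and> \<Phi> c = Some (\<Gamma> ! j)))"

definition nominals_distinct :: "ty list \<Rightarrow> kind list \<Rightarrow> tm list \<Rightarrow> pat \<Rightarrow> bool" where
  "nominals_distinct \<Gamma> K ws p \<longleftrightarrow> (\<forall>i\<in>nom_idx p. \<forall>j\<in>nom_idx p. i < length \<Gamma> \<longrightarrow> j < length \<Gamma> \<longrightarrow>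
     K ! i \<noteq> KAll \<longrightarrow> K ! j \<noteq> KAll \<longrightarrow> i \<noteq> j \<longrightarrow> ws ! i \<noteq> ws ! j)"

definition nominals_fresh :: "ty list \<Rightarrow> kind list \<Rightarrow> tm list \<Rightarrow> pat \<Rightarrow> bool" where
  "nominals_fresh \<Gamma> K ws p \<longleftrightarrow> (\<forall>i<length \<Gamma>. \<forall>j\<in>nom_idx p. K ! i = KAll \<longrightarrow> pvc i p \<noteq> 0 \<longrightarrow>
     j < length \<Gamma> \<longrightarrow> K ! j \<noteq> KAll \<longrightarrow> (\<forall>c. ws ! j = Nom c \<longrightarrow> c \<notin> noms (ws ! i)))"

lemma nominal_invariants_mono:
  assumes "nom_idx q \<subseteq> nom_idx p" "\<And>i. pvc i q \<noteq> 0 \<Longrightarrow> pvc i p \<noteq> 0"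
  shows "nominals_typed \<Phi> \<Gamma> K ws p \<Longrightarrow> nominals_typed \<Phi> \<Gamma> K ws q"
    "nominals_distinct \<Gamma> K ws p \<Longrightarrow> nominals_distinct \<Gamma> K ws q"
    "nominals_fresh \<Gamma> K ws p \<Longrightarrow> nominals_fresh \<Gamma> K ws q"
  using assms unfolding nominals_typed_def nominals_distinct_def nominals_fresh_def by blast+

lemma nominals_typed_PBack:
  assumes "nominals_typed \<Phi> \<Gamma> K ws (PBack p)" "length ws = length \<Gamma>"
    "\<And>j. j \<in> nom_idx (PBack p) \<Longrightarrow> j < length ws \<Longrightarrow> d \<notin> noms (ws ! j)"
  shows "nominals_typed (\<Phi>(d := Some A)) (A # \<Gamma>) (KPB # K) (Nom d # ws) p"
  unfolding nominals_typed_def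
proof (intro ballI impI)
  fix j assume j: "j \<in> nom_idx p" "j < length (A # \<Gamma>)" "(KPB # K) ! j \<noteq> KAll"
  show "\<exists>c. (Nom d # ws) ! j = Nom c \<and> (\<Phi>(d := Some A)) c = Some ((A # \<Gamma>) ! j)"
  proof (cases j)
    case (Suc j')
    then have "j' \<in> nom_idx (PBack p)" "j' < length \<Gamma>" "K ! j' \<noteq> KAll" using j by auto
    with assms obtain c where "ws ! j' = Nom c" "\<Phi> c = Some (\<Gamma> ! j')" "c \<noteq> d"
      unfolding nominals_typed_def by fastforce
    then show ?thesis using Suc by auto
  qed simp
qed

lemma nominals_distinct_PBack:
  assumes "nominals_typed \<Phi> \<Gamma> K ws (PBack p)" "nominals_distinct \<Gamma> K ws (PBack p)"
    "length ws = length \<Gamma>" "\<And>j. j \<in> nom_idx (PBack p) \<Longrightarrow> j < length ws \<Longrightarrow> d \<notin> noms (ws ! j)"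
  shows "nominals_distinct (A # \<Gamma>) (KPB # K) (Nom d # ws) p"
proof -
  have other: "ws ! j \<noteq> Nom d" if "Suc j \<in> nom_idx p" "j < length \<Gamma>" for j
    using assms(3,4) that by fastforce
  show ?thesis
    unfolding nominals_distinct_def
  proof (intro ballI impI)
    fix a b assume ab: "a \<in> nom_idx p" "b \<in> nom_idx p" "a < length (A # \<Gamma>)" "b < length (A # \<Gamma>)"
      "(KPB # K) ! a \<noteq> KAll" "(KPB # K) ! b \<noteq> KAll" "a \<noteq> b"
    show "(Nom d # ws) ! a \<noteq> (Nom d # ws) ! b"
    proof (cases a; cases b)
      fix a' b' assume "a = Suc a'" "b = Suc b'"
      then show ?thesis
        using assms(2) ab unfolding nominals_distinct_def by auto
    qed (use ab other in \<open>auto dest: sym\<close>)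
  qed
qed

lemma nominals_fresh_PBack:
  assumes "nominals_fresh \<Gamma> K ws (PBack p)"
    "\<And>j. pvc (Suc j) p \<noteq> 0 \<Longrightarrow> j < length ws \<Longrightarrow> d \<notin> noms (ws ! j)" "length ws = length \<Gamma>"
  shows "nominals_fresh (A # \<Gamma>) (KPB # K) (Nom d # ws) p"
  unfolding nominals_fresh_def
proof (intro allI impI ballI)
  fix a b c assume ab: "a < length (A # \<Gamma>)" "b \<in> nom_idx p" "(KPB # K) ! a = KAll" "pvc a p \<noteq> 0"
    "b < length (A # \<Gamma>)" "(KPB # K) ! b \<noteq> KAll" "(Nom d # ws) ! b = Nom c"
  obtain a' where a': "a = Suc a'" using ab(3) by (cases a) auto
  show "c \<notin> noms ((Nom d # ws) ! a)"
  proof (cases b)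
    case 0
    then show ?thesis using assms(2)[of a'] assms(3) a' ab by auto
  next
    case (Suc b')
    then show ?thesis
      using assms(1) a' ab unfolding nominals_fresh_def by auto
  qed
qed

lemma pmatch_PV_has_ty:
  assumes "pmatch T (msubst_p 0 ws (PV (Var i) ys))" "pat_ty opn csig \<Phi> \<Gamma> (PV (Var i) ys) B"
    "has_ty opn csig \<Phi> [] T B" "srestr T" "length ws = length \<Gamma>" "length K = length \<Gamma>"
    "spwf K (PV (Var i) ys)" "nominals_typed \<Phi> \<Gamma> K ws (PV (Var i) ys)"
    "nominals_distinct \<Gamma> K ws (PV (Var i) ys)" "nominals_fresh \<Gamma> K ws (PV (Var i) ys)"
  shows "has_ty opn csig \<Phi> [] (ws ! i) (\<Gamma> ! i) \<and> srestr (ws ! i)"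
proof -
  from assms(7) obtain js where js: "i < length K" "K ! i = KAll" "ys = map Var js" "distinct js"
    "\<forall>j\<in>set js. j < i \<and> K ! j \<noteq> KAll" by auto
  from assms(2) obtain As where As: "\<Gamma> ! i = binds As B"
    "list_all2 (\<lambda>Y B. has_ty opn csig \<Phi> \<Gamma> Y B \<and> open_ty opn B) ys As"
    by (auto elim: pat_ty_PVE)
  have "msubst_p 0 ws (PV (Var i) ys) = PV (ws ! i) (map (\<lambda>j. ws ! j) js)"
    using assms(5,6) js by auto
  then have "inst_backs (ws ! i) (map (\<lambda>j. ws ! j) js) = Some T"
    using assms(1) by (auto elim: pmatch_PVE)
  moreover have "list_all2 (\<lambda>j A. \<exists>c. ws ! j = Nom c \<and> c \<notin> noms (ws ! i) \<and> \<Phi> c = Some A \<and> open_ty opn A)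
    js As"
    using As(2) unfolding js(3) list_all2_map1
  proof (rule list.rel_mono_strong)
    fix j A assume j: "j \<in> set js" and "has_ty opn csig \<Phi> \<Gamma> (Var j) A \<and> open_ty opn A"
    then have A: "A = \<Gamma> ! j" "open_ty opn A" "j < length \<Gamma>" by (auto elim: has_ty_VarE)
    have j': "j \<in> nom_idx (PV (Var i) ys)" "K ! j \<noteq> KAll" using j js by auto
    then obtain c where c: "ws ! j = Nom c" "\<Phi> c = Some (\<Gamma> ! j)"
      using assms(8) A(3) unfolding nominals_typed_def by blast
    moreover have "c \<notin> noms (ws ! i)"
      using assms(6,10) js(1,2) j' A(3) c(1) unfolding nominals_fresh_def by auto
    ultimately show "\<exists>c. ws ! j = Nom c \<and> c \<notin> noms (ws ! i) \<and> \<Phi> c = Some A \<and> open_ty opn A"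
      using A by auto
  qed
  moreover have "inj_on (\<lambda>j. ws ! j) (set js)"
  proof (intro inj_onI)
    fix a b assume ab: "a \<in> set js" "b \<in> set js" "ws ! a = ws ! b"
    then have "a \<in> nom_idx (PV (Var i) ys)" "b \<in> nom_idx (PV (Var i) ys)"
      "a < length \<Gamma>" "b < length \<Gamma>" "K ! a \<noteq> KAll" "K ! b \<noteq> KAll"
      using js assms(6) by auto
    with ab(3) show "a = b" using assms(9) unfolding nominals_distinct_def by blast
  qed
  ultimately show ?thesis
    using has_ty_of_inst_backs[of "ws ! i" "map (\<lambda>j. ws ! j) js" T \<Phi> opn As csig B] assms(3,4) As(1) js(4)
    by (simp add: list_all2_map1 distinct_map)
qed

lemma pmatch_pattern_var_has_ty:
  assumes "pmatch T (msubst_p 0 ws p)" "pat_ty opn csig \<Phi> \<Gamma> p B" "has_ty opn csig \<Phi> [] T B"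
    "srestr T" "length ws = length \<Gamma>" "length K = length \<Gamma>" "list_all (lc 0) ws" "spwf K p"
    "nominals_typed \<Phi> \<Gamma> K ws p" "nominals_distinct \<Gamma> K ws p" "nominals_fresh \<Gamma> K ws p"
    "i < length \<Gamma>" "K ! i = KAll" "pvc i p \<noteq> 0"
  shows "has_ty opn csig \<Phi> [] (ws ! i) (\<Gamma> ! i) \<and> srestr (ws ! i)"
  using assms
proof (induction p arbitrary: T \<Phi> \<Gamma> B ws K i rule: pat_induct)
  case (PV x ys)
  then have "x = Var i" by (simp split: if_splits)
  then show ?case using pmatch_PV_has_ty PV.prems by blast
next
  case (PPair p q)
  from PPair.prems(1) obtain T1 T2 where T: "T = Pair T1 T2" "pmatch T1 (msubst_p 0 ws p)"
    "pmatch T2 (msubst_p 0 ws q)" by (auto elim: pmatch_PPairE)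
  from PPair.prems(2) obtain B1 B2 where B: "B = TProd B1 B2" "pat_ty opn csig \<Phi> \<Gamma> p B1"
    "pat_ty opn csig \<Phi> \<Gamma> q B2" by (auto elim: pat_ty_PPairE)
  from PPair.prems(3) T B have "has_ty opn csig \<Phi> [] T1 B1" "has_ty opn csig \<Phi> [] T2 B2"
    by (auto elim: has_ty_PairE)
  moreover have "nom_idx p \<subseteq> nom_idx (PPair p q)" "nom_idx q \<subseteq> nom_idx (PPair p q)" by auto
  ultimately show ?case
    using PPair.IH(1)[OF T(2) B(2)] PPair.IH(2)[OF T(3) B(3)] PPair.prems T
      nominal_invariants_mono[of p "PPair p q"] nominal_invariants_mono[of q "PPair p q"]
    by (cases "pvc i p = 0") auto
next
  case (PCon c ps)
  from PCon.prems(1) obtain Ts where Ts: "T = Con c Ts" "list_all2 pmatch Ts (map (msubst_p 0 ws) ps)"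
    by (auto elim: pmatch_PConE)
  from PCon.prems(2) obtain As b where As: "csig c = Some (As, b)" "B = TPrim b"
    "list_all2 (pat_ty opn csig \<Phi> \<Gamma>) ps As" by (auto elim: pat_ty_PConE)
  from PCon.prems(3) Ts As have h: "list_all2 (has_ty opn csig \<Phi> []) Ts As" by (auto elim: has_ty_ConE)
  from PCon.prems(14) obtain k where k: "k < length ps" "pvc i (ps ! k) \<noteq> 0"
    by (auto simp: in_set_conv_nth sum_list_eq_0_iff)
  then have q: "ps ! k \<in> set ps" "nom_idx (ps ! k) \<subseteq> nom_idx (PCon c ps)"
    "\<And>i. pvc i (ps ! k) \<noteq> 0 \<Longrightarrow> pvc i (PCon c ps) \<noteq> 0"
    by (auto simp: sum_list_eq_0_iff) (use nth_mem in blast)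
  show ?case
  proof (rule PCon.IH[OF q(1)])
    show "pmatch (Ts ! k) (msubst_p 0 ws (ps ! k))" "pat_ty opn csig \<Phi> \<Gamma> (ps ! k) (As ! k)"
      "has_ty opn csig \<Phi> [] (Ts ! k) (As ! k)" "srestr (Ts ! k)" "spwf K (ps ! k)"
      using Ts As h k PCon.prems(4,8) by (auto simp: list_all2_conv_all_nth list_all_iff)
  qed (use PCon.prems k nominal_invariants_mono[OF q(2,3)] in auto)
next
  case (PBack p)
  from PBack.prems(1) obtain t d where T: "T = Back t" "d \<notin> noms t \<union> noms_p (msubst_p 1 ws p)"
    "pmatch (inst 0 (Nom d) t) (inst_p 0 (Nom d) (msubst_p 1 ws p))"
    by (auto elim: pmatch_PBackE)
  from PBack.prems(2) obtain A B' where B: "B = TBind A B'" "pat_ty opn csig \<Phi> (A # \<Gamma>) p B'"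
    by (auto elim: pat_ty_PBackE)
  let ?\<Phi> = "\<Phi>(d := Some A)"
  have pm: "pmatch (inst 0 (Nom d) t) (msubst_p 0 (Nom d # ws) p)"
    using T(3) inst_msubst(3) PBack.prems(7) by auto
  have "d \<notin> noms_p p" using T(2) noms_msubst(3)[of p 1 ws] by auto
  then have pt: "pat_ty opn csig ?\<Phi> (A # \<Gamma>) p B'" using has_ty_cong_noms(3)[OF B(2)] by auto
  have ht: "has_ty opn csig ?\<Phi> [] (inst 0 (Nom d) t) B' \<and> srestr (inst 0 (Nom d) t)"
    using has_ty_Back_inst_fresh PBack.prems T B by auto
  have fresh_idx: "d \<notin> noms (ws ! j)" if "j \<in> nom_idx (PBack p)" "j < length ws" for j
    using noms_msubst_nom_idx[of "Suc j" p 1 ws] that T(2) by auto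
  have fresh_var: "d \<notin> noms (ws ! j)" if "pvc (Suc j) p \<noteq> 0" "j < length ws" for j
    using noms_msubst_pvc[of "Suc j" p 1 ws] that T(2) by auto
  have "has_ty opn csig ?\<Phi> [] ((Nom d # ws) ! Suc i) ((A # \<Gamma>) ! Suc i) \<and> srestr ((Nom d # ws) ! Suc i)"
  proof (rule PBack.IH[OF pm pt ht[THEN conjunct1] ht[THEN conjunct2]])
    show "nominals_typed ?\<Phi> (A # \<Gamma>) (KPB # K) (Nom d # ws) p"
      using nominals_typed_PBack PBack.prems(5,9) fresh_idx by blast
    show "nominals_distinct (A # \<Gamma>) (KPB # K) (Nom d # ws) p"
      using nominals_distinct_PBack PBack.prems(5,9,10) fresh_idx by blast
    show "nominals_fresh (A # \<Gamma>) (KPB # K) (Nom d # ws) p"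
      using nominals_fresh_PBack PBack.prems(5,11) fresh_var by blast
  qed (use PBack.prems in auto)
  moreover have "d \<notin> noms (ws ! i)" using fresh_var PBack.prems by auto
  ultimately show ?case using has_ty_cong_noms(1)[of opn csig ?\<Phi> "[]" "ws ! i" "\<Gamma> ! i" \<Phi>] by auto
qed auto

lemma pmatch_instance_has_ty:
  assumes "pmatch T (msubst_p 0 ws p)" "pat_ty opn csig \<Phi> \<Gamma> p B" "has_ty opn csig \<Phi> [] T B"
    "srestr T" "length ws = length \<Gamma>" "length K = length \<Gamma>" "list_all (lc 0) ws" "spwf K p"
    and occurs: "\<forall>i<length \<Gamma>. (K ! i = KAll \<longrightarrow> pvc i p \<noteq> 0) \<and> (K ! i \<noteq> KAll \<longrightarrow> rig i p)"
    and distinct: "\<forall>i<length \<Gamma>. \<forall>j<length \<Gamma>. K ! i \<noteq> KAll \<longrightarrow> K ! j \<noteq> KAll \<longrightarrow> i \<noteq> j \<longrightarrow> ws ! i \<noteq> ws ! j"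
    and fresh: "\<forall>i<length \<Gamma>. \<forall>j<length \<Gamma>. K ! i = KAll \<longrightarrow> K ! j \<noteq> KAll \<longrightarrow>
      (\<forall>c. ws ! j = Nom c \<longrightarrow> c \<notin> noms (ws ! i))"
    and i: "i < length \<Gamma>"
  shows "has_ty opn csig \<Phi> [] (ws ! i) (\<Gamma> ! i) \<and> srestr (ws ! i)"
proof -
  have nominal: "\<exists>c. ws ! j = Nom c \<and> \<Phi> c = Some (\<Gamma> ! j)" if "j < length \<Gamma>" "K ! j \<noteq> KAll" for j
    using pmatch_rigid_nominal[OF assms(1-5,7)] occurs that by blast
  show ?thesis
  proof (cases "K ! i = KAll")
    case True
    have "nominals_typed \<Phi> \<Gamma> K ws p" "nominals_distinct \<Gamma> K ws p" "nominals_fresh \<Gamma> K ws p"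
      using nominal distinct fresh
      unfolding nominals_typed_def nominals_distinct_def nominals_fresh_def by blast+
    then show ?thesis using pmatch_pattern_var_has_ty[OF assms(1-8)] occurs i True by blast
  next
    case False
    then obtain c where "ws ! i = Nom c" "\<Phi> c = Some (\<Gamma> ! i)" using nominal i by blast
    then show ?thesis by (auto intro: has_ty_rule_ty_pat_ty.t_nom)
  qed
qed

section \<open>Clauses and subject reduction\<close>

lemma noms_r_nabs [simp]: "noms_r ((RNab ^^ m) R) = noms_r R"
  by (induction m) auto

lemma inst_r_nabs: "lc 0 s \<Longrightarrow> inst_r k s ((RNab ^^ m) R) = (RNab ^^ m) (inst_r (k + m) s R)"
  by (induction m arbitrary: k) auto

lemma msubst_r_eq_nabs:
  "msubst_r k ws R0 = (RNab ^^ m) (RArr p u) \<Longrightarrow>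
   \<exists>p0 u0. R0 = (RNab ^^ m) (RArr p0 u0) \<and> p = msubst_p (k + m) ws p0 \<and> u = msubst (k + m) ws u0"
proof (induction m arbitrary: k R0)
  case 0
  then show ?case by (cases R0) auto
next
  case (Suc m)
  then obtain R1 where "R0 = RNab R1" "msubst_r (Suc k) ws R1 = (RNab ^^ m) (RArr p u)"
    by (cases R0) auto
  with Suc.IH[of "Suc k" R1] show ?case by auto
qed

inductive_cases rule_ty_RAllE: "rule_ty opn csig \<Phi> \<Gamma> B (RAll R) A"
inductive_cases rule_ty_RNabE: "rule_ty opn csig \<Phi> \<Gamma> B (RNab R) A"
inductive_cases rule_ty_RArrE: "rule_ty opn csig \<Phi> \<Gamma> B (RArr p u) A"

lemma rule_ty_nabs:
  "rule_ty opn csig \<Phi> \<Gamma> B ((RNab ^^ m) (RArr p u)) A \<Longrightarrow>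
   \<exists>Ds. length Ds = m \<and> pat_ty opn csig \<Phi> (Ds @ \<Gamma>) p B \<and> has_ty opn csig \<Phi> (Ds @ \<Gamma>) u A"
proof (induction m arbitrary: \<Gamma>)
  case 0
  then show ?case by (auto elim: rule_ty_RArrE)
next
  case (Suc m)
  then obtain C where "rule_ty opn csig \<Phi> (C # \<Gamma>) B ((RNab ^^ m) (RArr p u)) A"
    by (auto elim: rule_ty_RNabE)
  with Suc.IH obtain Ds where "length Ds = m" "pat_ty opn csig \<Phi> (Ds @ C # \<Gamma>) p B"
    "has_ty opn csig \<Phi> (Ds @ C # \<Gamma>) u A" by blast
  then show ?case by (intro exI[of _ "Ds @ [C]"]) auto
qed

lemma srrestr_nabs: "srrestr K ((RNab ^^ m) R) \<Longrightarrow> srrestr (replicate m KNab @ K) R"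
proof (induction m arbitrary: K)
  case (Suc m)
  then have "srrestr (replicate m KNab @ KNab # K) R" by simp
  then show ?case by (simp add: replicate_app_Cons_same)
qed simp

lemma open_nabs_msubst:
  "list_all (lc 0) ws \<Longrightarrow>
   open_nabs cs ((RNab ^^ length cs) (RArr (msubst_p (length cs) ws p) (msubst (length cs) ws u)))
   = RArr (msubst_p 0 (rev (map Nom cs) @ ws) p) (msubst 0 (rev (map Nom cs) @ ws) u)"
proof (induction cs arbitrary: ws)
  case (Cons c cs)
  then have "inst_r 0 (Nom c) ((RNab ^^ length cs)
      (RArr (msubst_p (Suc (length cs)) ws p) (msubst (Suc (length cs)) ws u)))
    = (RNab ^^ length cs) (RArr (msubst_p (length cs) (Nom c # ws) p) (msubst (length cs) (Nom c # ws) u))"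
    by (simp add: inst_r_nabs inst_msubst)
  with Cons.prems Cons.IH[of "Nom c # ws"] show ?case by simp
qed simp

lemma pmatch_nab_instance_has_ty:
  fixes cs :: "nat list" and xs :: "tm list"
  defines "ws \<equiv> rev (map Nom cs) @ xs"
  assumes "pmatch T (msubst_p 0 ws p)" "pat_ty opn csig \<Phi> (Ds @ \<Gamma>) p B" "has_ty opn csig \<Phi> [] T B"
    "srestr T" "length Ds = length cs" "length xs = length \<Gamma>" "list_all (lc 0) xs"
    "srrestr (replicate (length cs) KNab @ K) (RArr p u)" "length K = length \<Gamma>" "set K \<subseteq> {KAll}"
    "distinct cs" "\<forall>c\<in>set cs. c \<notin> noms_p (msubst_p (length cs) xs p)"
  shows "\<forall>i<length (Ds @ \<Gamma>). has_ty opn csig \<Phi> [] (ws ! i) ((Ds @ \<Gamma>) ! i) \<and> srestr (ws ! i)"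
proof -
  let ?m = "length cs" and ?K = "replicate (length cs) KNab @ K"
  have spwf: "spwf ?K p"
    and occ: "\<forall>i<length ?K. (?K ! i = KAll \<longrightarrow> pvc i p = 1) \<and> (?K ! i = KNab \<longrightarrow> rig i p)"
    using assms(9) by simp_all
  have lens: "length ws = length (Ds @ \<Gamma>)" "length ?K = length (Ds @ \<Gamma>)"
    using assms(6,7,10) ws_def by simp_all
  have lc: "list_all (lc 0) ws" using assms(8) ws_def by (auto simp: list_all_iff)
  have K: "?K ! i = (if i < ?m then KNab else KAll)" if "i < length (Ds @ \<Gamma>)" for i
    using that assms(6,10,11) by (auto simp: nth_append subset_iff)
  have ws: "ws ! i = (if i < ?m then Nom (rev cs ! i) else xs ! (i - ?m))" for i
    using ws_def by (simp add: nth_append rev_map)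
  show ?thesis
  proof (intro allI impI, rule pmatch_instance_has_ty[OF assms(2-5) lens lc spwf])
    show "\<forall>i<length (Ds @ \<Gamma>). (?K ! i = KAll \<longrightarrow> pvc i p \<noteq> 0) \<and> (?K ! i \<noteq> KAll \<longrightarrow> rig i p)"
    proof (intro allI impI)
      fix i assume "i < length (Ds @ \<Gamma>)"
      with occ K[of i] lens(2) show "(?K ! i = KAll \<longrightarrow> pvc i p \<noteq> 0) \<and> (?K ! i \<noteq> KAll \<longrightarrow> rig i p)"
        by (cases "i < ?m") auto
    qed
    show "\<forall>i<length (Ds @ \<Gamma>). \<forall>j<length (Ds @ \<Gamma>). ?K ! i \<noteq> KAll \<longrightarrow> ?K ! j \<noteq> KAll \<longrightarrow> i \<noteq> j
      \<longrightarrow> ws ! i \<noteq> ws ! j"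
    proof (intro allI impI)
      fix i j assume "i < length (Ds @ \<Gamma>)" "j < length (Ds @ \<Gamma>)" "?K ! i \<noteq> KAll" "?K ! j \<noteq> KAll"
        "i \<noteq> j"
      then have "i < ?m" "j < ?m" "i \<noteq> j" using K by (auto split: if_splits)
      then show "ws ! i \<noteq> ws ! j" using ws assms(12) by (simp add: nth_eq_iff_index_eq)
    qed
    show "\<forall>i<length (Ds @ \<Gamma>). \<forall>j<length (Ds @ \<Gamma>). ?K ! i = KAll \<longrightarrow> ?K ! j \<noteq> KAll
      \<longrightarrow> (\<forall>c. ws ! j = Nom c \<longrightarrow> c \<notin> noms (ws ! i))"
    proof (intro allI impI)
      fix i j c assume ij: "i < length (Ds @ \<Gamma>)" "j < length (Ds @ \<Gamma>)" "?K ! i = KAll"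
        "?K ! j \<noteq> KAll" "ws ! j = Nom c"
      then have "?m \<le> i" "j < ?m" using K by (auto split: if_splits)
      then have "c \<in> set cs" using ij(5) ws by (metis length_rev nth_mem set_rev tm.inject(2))
      moreover have "noms (xs ! (i - ?m)) \<subseteq> noms_p (msubst_p ?m xs p)"
        using noms_msubst_pvc[of i p ?m xs] occ K ij(1) lens \<open>?m \<le> i\<close> assms(6,7) by auto
      ultimately show "c \<notin> noms (ws ! i)" using ws \<open>?m \<le> i\<close> assms(13) by auto
    qed
  qed
qed

text \<open>The terms xs instantiating the all-bound pattern variables are not assumed to be typed:
  their types are only recovered from the successful match.\<close>
lemma clause_has_ty:
  assumes "clause T R U" "R = msubst_r 0 xs R0" "rule_ty opn csig \<Phi> \<Gamma> B R0 A" "srrestr K R0"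
    "length K = length \<Gamma>" "length xs = length \<Gamma>" "set K \<subseteq> {KAll}" "list_all (lc 0) xs"
    "has_ty opn csig \<Phi> [] T B" "srestr T"
  shows "has_ty opn csig \<Phi> [] U A \<and> srestr U"
  using assms
proof (induction arbitrary: xs \<Gamma> K R0 rule: clause.induct)
  case (c_all x T R U)
  from c_all.prems(1) obtain R1 where R0: "R0 = RAll R1" "R = msubst_r 1 xs R1" by (cases R0) auto
  from c_all.prems(2) R0 obtain C where "rule_ty opn csig \<Phi> (C # \<Gamma>) B R1 A"
    by (auto elim: rule_ty_RAllE)
  moreover have "inst_r 0 x R = msubst_r 0 (x # xs) R1"
    using R0(2) inst_msubst(2) c_all.prems(7) c_all.hyps(1) by simp
  ultimately show ?case
    using c_all.IH[of "x # xs" R1 "C # \<Gamma>" "KAll # K"] c_all.prems c_all.hyps R0 by auto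
next
  case (c_nab cs m p u P U T)
  from msubst_r_eq_nabs[OF c_nab.prems(1)[symmetric]] obtain p0 u0 where
    R0: "R0 = (RNab ^^ m) (RArr p0 u0)" "p = msubst_p m xs p0" "u = msubst m xs u0" by auto
  define ws where "ws = rev (map Nom cs) @ xs"
  have PU: "P = msubst_p 0 ws p0" "U = msubst 0 ws u0"
    using c_nab.hyps(1,4) open_nabs_msubst[OF c_nab.prems(7), of cs p0 u0] R0 ws_def by auto
  from rule_ty_nabs c_nab.prems(2) R0 obtain Ds where Ds: "length Ds = m"
    "pat_ty opn csig \<Phi> (Ds @ \<Gamma>) p0 B" "has_ty opn csig \<Phi> (Ds @ \<Gamma>) u0 A" by blast
  have restr: "srrestr (replicate m KNab @ K) (RArr p0 u0)"
    using srrestr_nabs c_nab.prems(3) R0(1) by blast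
  have ws_ty: "\<forall>i<length (Ds @ \<Gamma>). has_ty opn csig \<Phi> [] (ws ! i) ((Ds @ \<Gamma>) ! i) \<and> srestr (ws ! i)"
    using pmatch_nab_instance_has_ty[where cs = cs and xs = xs and p = p0 and u = u0 and K = K] c_nab.hyps c_nab.prems Ds restr R0 PU ws_def
    by auto
  have lens: "length ws = length (Ds @ \<Gamma>)" using Ds(1) c_nab.hyps(1) c_nab.prems(5) ws_def by simp
  have lc: "list_all (lc 0) ws" using c_nab.prems(7) ws_def by (auto simp: list_all_iff)
  have "list_all srestr ws" using ws_ty lens by (auto simp: list_all_length)
  then show ?case
    using has_ty_msubst[of opn csig \<Phi> "[]" "Ds @ \<Gamma>" u0 A ws] srestr_msubst[OF lc] Ds(3) PU
      restr ws_ty lens lc by auto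
qed

lemma eval_preserves_has_ty:
  "eval E V \<Longrightarrow> has_ty opn csig \<Phi> [] E A \<Longrightarrow> srestr E \<Longrightarrow> has_ty opn csig \<Phi> [] V A \<and> srestr V"
  "evalm T Rs V \<Longrightarrow> has_ty opn csig \<Phi> [] T B \<Longrightarrow> srestr T
   \<Longrightarrow> list_all (\<lambda>R. rule_ty opn csig \<Phi> [] B R A) Rs \<Longrightarrow> list_all (srrestr []) Rs
   \<Longrightarrow> has_ty opn csig \<Phi> [] V A \<and> srestr V"
proof (induction arbitrary: \<Phi> A and \<Phi> A B rule: eval_evalm.inducts)
  case (e_con Ms Vs c)
  then show ?case
    by (fastforce elim!: has_ty_ConE intro!: has_ty_rule_ty_pat_ty.t_con
        simp: list_all2_conv_all_nth list_all_length)
next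
  case (e_pair M V N W)
  then show ?case by (auto elim!: has_ty_PairE intro!: has_ty_rule_ty_pat_ty.t_pair)
next
  case (e_new c E V)
  from e_new.prems(1) obtain C where "has_ty opn csig \<Phi> [C] E A" by (auto elim: has_ty_NewE)
  then have "has_ty opn csig (\<Phi>(c := Some C)) [] (inst 0 (Nom c) E) A \<and> srestr (inst 0 (Nom c) E)"
    using has_ty_inst0_fresh e_new.prems(2) e_new.hyps(1) by simp
  then have "has_ty opn csig (\<Phi>(c := Some C)) [] V A \<and> srestr V" using e_new.IH by blast
  then show ?case using e_new.hyps(1) has_ty_cong_noms(1)[of _ _ "\<Phi>(c := Some C)" "[]" V A \<Phi>] by auto
next
  case (e_app M R N U V)
  from e_app.prems(1) obtain A' where "has_ty opn csig \<Phi> [] M (TArr A' A)" "has_ty opn csig \<Phi> [] N A'"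
    by (auto elim: has_ty_AppE)
  with e_app.IH(1,2) e_app.prems(2) have "has_ty opn csig \<Phi> [A'] R A" "srestr R"
    "has_ty opn csig \<Phi> [] U A'" "srestr U"
    by (auto elim: has_ty_LamE)
  then show ?case using e_app.IH(3) has_ty_inst0 srestr_inst(1) by blast
next
  case (e_let M U R V)
  from e_let.prems(1) obtain A' where "has_ty opn csig \<Phi> [] M A'" "has_ty opn csig \<Phi> [A'] R A"
    by (auto elim: has_ty_LetE)
  with e_let.IH(1) e_let.prems(2) show ?case
    using e_let.IH(2) has_ty_inst0 srestr_inst(1) by (metis srestr.simps(6))
next
  case (e_fix R V)
  from e_fix.prems(1) obtain A1 A2 where "A = TArr A1 A2" "has_ty opn csig \<Phi> [TArr A1 A2] R (TArr A1 A2)"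
    by (auto elim: has_ty_FixE)
  then show ?case using e_fix.IH e_fix.prems has_ty_inst0 srestr_inst(1) by (metis srestr.simps(7))
next
  case (e_at M R X V)
  from e_at.prems(1) obtain A' where "has_ty opn csig \<Phi> [] M (TBind A' A)" "has_ty opn csig \<Phi> [] X A'"
    by (auto elim: has_ty_AtE)
  with e_at.IH(1) e_at.prems(2) have "has_ty opn csig \<Phi> [A'] R A" "srestr R" "srestr X"
    "has_ty opn csig \<Phi> [] X A'"
    by (auto elim: has_ty_BackE)
  then show ?case using e_at.IH(2) has_ty_inst0 srestr_inst(1) by blast
next
  case (e_back c E W)
  from e_back.prems(1) obtain C B where t: "A = TBind C B" "open_ty opn C" "has_ty opn csig \<Phi> [C] E B"
    by (auto elim: has_ty_BackE)
  let ?\<Phi> = "\<Phi>(c := Some C)"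
  have W: "has_ty opn csig ?\<Phi> [] W B \<and> srestr W"
    using has_ty_inst0_fresh[OF t(3)] e_back.prems(2) e_back.hyps(1) e_back.IH by auto
  then have "has_ty opn csig ?\<Phi> [] (Back (close 0 c W)) (TBind C B)"
    using t(2) has_ty_close0 by (auto intro: has_ty_rule_ty_pat_ty.t_back)
  then have "has_ty opn csig \<Phi> [] (Back (close 0 c W)) (TBind C B)"
    using has_ty_cong_noms(1) noms_close(1)[of c 0 W] by fastforce
  then show ?case using t(1) W srestr_close(1) by simp
next
  case (e_match M T Rs V)
  from e_match.prems(1) obtain B where "has_ty opn csig \<Phi> [] M B"
    "list_all (\<lambda>R. rule_ty opn csig \<Phi> [] B R A) Rs" by (auto elim: has_ty_MatchE)
  with e_match.IH e_match.prems(2) show ?case by (meson srestr.simps(13))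
next
  case (em_hit T R U V Rs)
  then have "has_ty opn csig \<Phi> [] U A \<and> srestr U"
    using clause_has_ty[of T R U "[]" R opn csig \<Phi> "[]" B A "[]"] by auto
  then show ?case using em_hit.IH by blast
qed auto

theorem mainTheorem2:
  fixes opn :: "string \<Rightarrow> bool"
    and csig :: "string \<Rightarrow> (ty list \<times> string) option"
    and E V :: tm and A :: ty
  assumes "restr E"
    and "has_ty opn csig Map.empty [] E A"
    and "eval E V"
  shows "has_ty opn csig Map.empty [] V A"
  using eval_preserves_has_ty(1)[OF assms(3,2) restr_imp_srestr(1)[OF assms(1)]] by simp

end
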